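(* Assume the following setting. For each $n$, $X\in\mathbb{R}^{n\times e}$ is deterministic with rows $x_i$; $\Gamma\in\mathbb{R}^{e\times p}$, $\sigma^2>0$, $\sigma_z^2>0$, $e,p$ are fixed; $\lambda\ge0$ and $\beta_0\in\mathbb{R}^e$ depend on $n$. Let $y=X\beta_0+\epsilon$, $Z=X\Gamma+E$, with entries of $E$ i.i.d. $N(0,\sigma_z^2)$, entries of $\epsilon$ i.i.d. $N(0,\sigma^2)$, $E,\epsilon$ independent. Assume as $n\to\infty$: $\lambda/n\to\kappa\ge0$; $\sqrt n\beta_0\to\alpha_0$; $\frac1nX^TX\to\Sigma$ positive definite; $\frac1n\mathbf{1}^TX\to\Theta\in\mathbb{R}^{1\times e}$; $\max_i\|x_i\|=o(n^{1/3})$. Let $\tilde Z=[\mathbf{1},Z]$ with rows $\tilde Z_i$, and let $\tilde Z_{(i)}$, $y_{(i)}$ denote $\tilde Z$, $y$ with the $i$-th row (entry) removed. Define the pre-validated vector $\tilde y\in\mathbb{R}^n$ by $\tilde y_i=\tilde Z_i(\tilde Z_{(i)}^T\tilde Z_{(i)}+\lambda I)^{-1}\tilde Z_{(i)}^Ty_{(i)}$, and let $$y':=\tilde Z(\tilde Z^T\tilde Z+\lambda I)^{-1}\tilde Z^TX\beta_0+\tilde Z(\tilde Z^T\tilde Z+\lambda I)^{-1}\tilde Z^T\epsilon.$$ Then as $n\to\infty$, $\|\tilde y-y'\|=o_P(1)$, $\|\tilde y\|=O_P(1)$ and $\|y'\|=O_P(1)$.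
   Context: $\|\cdot\|$ is the Euclidean norm; $I$ is the $(p+1)\times(p+1)$ identity. *)

theory Defs
  imports "HOL-Probability.Probability"
begin

definition outerp :: "real^'a \<Rightarrow> real^'a^'a" where
  "outerp v = (\<chi> a b. v $ a * v $ b)"

definition posdef :: "real^'a^'a \<Rightarrow> bool" where
  "posdef A \<longleftrightarrow> transpose A = A \<and> (\<forall>v. v \<noteq> 0 \<longrightarrow> v \<bullet> (A *v v) > 0)"

definition outer_prob :: "'w measure \<Rightarrow> 'w set \<Rightarrow> real" where
  "outer_prob M S = Inf {measure M A | A. A \<in> sets M \<and> S \<inter> space M \<subseteq> A}"

definition small_oP :: "'w measure \<Rightarrow> (nat \<Rightarrow> 'w \<Rightarrow> real) \<Rightarrow> bool" where
  "small_oP M Y \<longleftrightarrow> (\<forall>\<delta>>0. (\<lambda>n. outer_prob M {\<omega>\<in>space M. \<bar>Y n \<omega>\<bar> > \<delta>}) \<longlonglongrightarrow> 0)"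

definition big_OP :: "'w measure \<Rightarrow> (nat \<Rightarrow> 'w \<Rightarrow> real) \<Rightarrow> bool" where
  "big_OP M Y \<longleftrightarrow> (\<forall>\<eta>>0. \<exists>K N. \<forall>n\<ge>N. outer_prob M {\<omega>\<in>space M. \<bar>Y n \<omega>\<bar> > K} < \<eta>)"

text \<open>Augmented row [1, z] of Z-tilde; the intercept column is indexed by None.\<close>
definition aug :: "real^'p \<Rightarrow> real^('p option)" where
  "aug z = (\<chi> k. case k of None \<Rightarrow> 1 | Some j \<Rightarrow> z $ j)"

definition ridge_coef :: "real \<Rightarrow> (nat \<Rightarrow> real^'q) \<Rightarrow> (nat \<Rightarrow> real) \<Rightarrow> nat set \<Rightarrow> real^'q" where
  "ridge_coef lam Zt r S =
     matrix_inv ((\<Sum>j\<in>S. outerp (Zt j)) + lam *\<^sub>R mat 1) *v (\<Sum>j\<in>S. r j *\<^sub>R Zt j)"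

end

theory Submission
  imports Defs
begin

(*
  Write z\<^sub>j = [1, x\<^sub>j \<Gamma> + E\<^sub>j] for the augmented rows and y\<^sub>j = x\<^sub>j \<bullet> \<beta>\<^sub>0 + \<epsilon>\<^sub>j.
  Because the noise E has variance \<sigma>z\<^sup>2 > 0, the Gram matrix \<Sum>\<^sub>j z\<^sub>j z\<^sub>j\<^sup>T is at least c n I
  with probability tending to one: its centred parts are small by second-moment bounds, and
  the bounded column means only tilt the intercept direction.  On that event the full ridge fit y' satisfies
  \<parallel>y'\<parallel>\<^sup>2 \<le> \<parallel>\<Sum>\<^sub>j y\<^sub>j z\<^sub>j\<parallel>\<^sup>2 / (c n), which is O\<^sub>P(1) since the signal energy \<Sum>\<^sub>j (x\<^sub>j \<bullet> \<beta>\<^sub>0)\<^sup>2 stays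
  bounded and \<Sum>\<^sub>j \<epsilon>\<^sub>j z\<^sub>j has second moment O(n).  By Sherman--Morrison, deleting row i moves
  the fit at i by at most 2 \<parallel>z\<^sub>i\<parallel>\<^sup>2 / (c n) \<cdot> |y'\<^sub>i - y\<^sub>i|, and max\<^sub>i \<parallel>z\<^sub>i\<parallel>\<^sup>2 = o(n) by the growth
  condition on the rows; this gives \<parallel>\<tilde>y - y'\<parallel> = o\<^sub>P(1).  Every probability estimate is
  Markov's inequality for a second moment of a sum of independent centred Gaussian terms.
*)

lemma square_add_le: "((x::real) + y)\<^sup>2 \<le> 2 * x\<^sup>2 + 2 * y\<^sup>2"
  using zero_le_power2[of "x - y"] unfolding power2_diff power2_sum by linarith

lemma square_diff_le: "((x::real) - y)\<^sup>2 \<le> 2 * x\<^sup>2 + 2 * y\<^sup>2"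
  using square_add_le[of x "-y"] by simp

lemma abs_mult_le_sum_squares: "\<bar>(a::real) * b\<bar> \<le> a\<^sup>2 + b\<^sup>2"
proof -
  have "2 * (\<bar>a\<bar> * \<bar>b\<bar>) \<le> a\<^sup>2 + b\<^sup>2" using sum_squares_bound[of "\<bar>a\<bar>" "\<bar>b\<bar>"] by (simp add: mult.assoc)
  moreover have "0 \<le> \<bar>a\<bar> * \<bar>b\<bar>" by simp
  ultimately show ?thesis unfolding abs_mult by linarith
qed

lemma square_mult_square_le: "(x::real)\<^sup>2 * y\<^sup>2 \<le> x ^ 4 + y ^ 4"
  using abs_mult_le_sum_squares[of "x\<^sup>2" "y\<^sup>2"] by (simp add: power_mult[symmetric])

lemma sum_squares_add_le: "(\<Sum>i\<in>S. (a i + b i)\<^sup>2) \<le> 2 * (\<Sum>i\<in>S. (a i)\<^sup>2) + 2 * (\<Sum>i\<in>S. (b i :: real)\<^sup>2)"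
  using sum_mono[of S "\<lambda>i. (a i + b i)\<^sup>2" "\<lambda>i. 2 * (a i)\<^sup>2 + 2 * (b i)\<^sup>2"] square_add_le
  by (simp add: sum.distrib sum_distrib_left)

lemma mean_sq_le_sum_sq: "real n * ((\<Sum>j<n. t j) / real n)\<^sup>2 \<le> (\<Sum>j<n. (t j :: real)\<^sup>2)"
proof (cases "n = 0")
  case False
  have "(\<Sum>j<n. 1 * t j)\<^sup>2 \<le> (\<Sum>j<n. (1::real)\<^sup>2) * (\<Sum>j<n. (t j)\<^sup>2)"
    by (rule Cauchy_Schwarz_ineq_sum)
  with False show ?thesis by (simp add: power2_eq_square field_simps)
qed simp

lemma norm_add_sq_le: "(norm (x + y :: 'a::real_normed_vector))\<^sup>2 \<le> 2 * (norm x)\<^sup>2 + 2 * (norm y)\<^sup>2"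
proof -
  have "(norm (x + y))\<^sup>2 \<le> (norm x + norm y)\<^sup>2" by (rule power_mono[OF norm_triangle_ineq]) simp
  also have "\<dots> \<le> 2 * (norm x)\<^sup>2 + 2 * (norm y)\<^sup>2" by (rule square_add_le)
  finally show ?thesis .
qed

lemma norm_sum_scaleR_sq_le:
  fixes z :: "nat \<Rightarrow> real^'q"
  shows "(norm (\<Sum>j\<in>S. s j *\<^sub>R z j))\<^sup>2 \<le> (\<Sum>j\<in>S. (s j)\<^sup>2) * (\<Sum>j\<in>S. (norm (z j))\<^sup>2)"
proof -
  have "norm (\<Sum>j\<in>S. s j *\<^sub>R z j) \<le> (\<Sum>j\<in>S. \<bar>s j\<bar> * norm (z j))"
    by (rule order_trans[OF norm_sum]) simp
  then have "(norm (\<Sum>j\<in>S. s j *\<^sub>R z j))\<^sup>2 \<le> (\<Sum>j\<in>S. \<bar>s j\<bar> * norm (z j))\<^sup>2"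
    by (rule power_mono) simp
  also have "\<dots> \<le> (\<Sum>j\<in>S. \<bar>s j\<bar>\<^sup>2) * (\<Sum>j\<in>S. (norm (z j))\<^sup>2)"
    by (rule Cauchy_Schwarz_ineq_sum)
  finally show ?thesis by simp
qed

lemma eventually_const_over_n_less: "e > 0 \<Longrightarrow> eventually (\<lambda>n. C / real n < e) sequentially"
  using order_tendstoD(2)[OF lim_const_over_n[of C]] by simp

section \<open>Ridge regression with a coercive Gram matrix\<close>

lemma outerp_mulv: "outerp z *v v = (z \<bullet> v) *\<^sub>R z"
  by (simp add: outerp_def matrix_vector_mult_def inner_vec_def vec_eq_iff sum_distrib_left
      mult.commute mult.left_commute)

lemma sum_matrix_vector_mult: "(\<Sum>j\<in>S. (A j :: real^'n^'m)) *v v = (\<Sum>j\<in>S. A j *v v)"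
  by (induction S rule: infinite_finite_induct) (auto simp: matrix_vector_mult_add_rdistrib)

lemma scaleR_mat_1_mulv: "((c::real) *\<^sub>R mat 1) *v (v::real^'n) = c *\<^sub>R v"
  by (metis matrix_vector_mul_lid scaleR_matrix_vector_assoc)

definition ridge_matrix :: "real \<Rightarrow> (nat \<Rightarrow> real^'q) \<Rightarrow> nat set \<Rightarrow> real^'q^'q" where
  "ridge_matrix lam z S = (\<Sum>j\<in>S. outerp (z j)) + lam *\<^sub>R mat 1"

definition ridge_rhs :: "(nat \<Rightarrow> real^'q) \<Rightarrow> (nat \<Rightarrow> real) \<Rightarrow> nat set \<Rightarrow> real^'q" where
  "ridge_rhs z r S = (\<Sum>j\<in>S. r j *\<^sub>R z j)"

lemma ridge_coef_eq: "ridge_coef lam z r S = matrix_inv (ridge_matrix lam z S) *v ridge_rhs z r S"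
  by (simp add: ridge_coef_def ridge_matrix_def ridge_rhs_def)

lemma ridge_coef_cong:
  assumes "\<And>j. j \<in> S \<Longrightarrow> z j = z' j" "\<And>j. j \<in> S \<Longrightarrow> r j = r' j"
  shows "ridge_coef lam z r S = ridge_coef lam z' r' S"
  unfolding ridge_coef_def using assms by (simp cong: sum.cong)

lemma ridge_coef_add:
  "ridge_coef lam z r1 S + ridge_coef lam z r2 S = ridge_coef lam z (\<lambda>j. r1 j + r2 j) S"
  unfolding ridge_coef_def
  by (simp add: matrix_vector_right_distrib[symmetric] scaleR_add_left sum.distrib)

lemma ridge_matrix_mulv: "ridge_matrix lam z S *v v = (\<Sum>j\<in>S. (z j \<bullet> v) *\<^sub>R z j) + lam *\<^sub>R v"
  by (simp add: ridge_matrix_def matrix_vector_mult_add_rdistrib sum_matrix_vector_mult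
      outerp_mulv scaleR_mat_1_mulv)

lemma inner_ridge_matrix_mulv:
  "v \<bullet> (ridge_matrix lam z S *v v) = (\<Sum>j\<in>S. (v \<bullet> z j)\<^sup>2) + lam * (norm v)\<^sup>2"
  by (simp add: ridge_matrix_mulv inner_add_right inner_sum_right inner_commute
      power2_eq_square flip: power2_norm_eq_inner)

lemma coercive_matrix_mulv_inj:
  fixes A :: "real^'n^'n"
  assumes d: "d > 0" and coercive: "\<And>v. d * (norm v)\<^sup>2 \<le> v \<bullet> (A *v v)"
    and eq: "A *v x = A *v y"
  shows "x = y"
proof -
  have "A *v (x - y) = 0" using eq by (simp add: matrix_vector_mult_diff_distrib)
  with coercive[of "x - y"] have "d * (norm (x - y))\<^sup>2 \<le> 0" by simp
  with d show ?thesis by (simp add: mult_le_0_iff)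
qed

lemma coercive_matrix_inv_mulv:
  fixes A :: "real^'n^'n"
  assumes d: "d > 0" and coercive: "\<And>v. d * (norm v)\<^sup>2 \<le> v \<bullet> (A *v v)"
  shows "A *v (matrix_inv A *v b) = b"
proof -
  have "\<forall>x. A *v x = 0 \<longrightarrow> x = 0"
    using coercive_matrix_mulv_inj[OF d coercive, of _ 0] by simp
  then have "invertible A"
    by (simp add: invertible_left_inverse matrix_left_invertible_ker)
  then have "A ** matrix_inv A = mat 1"
    unfolding invertible_def matrix_inv_def by (rule someI_ex[THEN conjunct1])
  then show ?thesis by (simp add: matrix_vector_mul_assoc)
qed

lemma coercive_solution_bounds:
  fixes A :: "real^'n^'n"
  assumes d: "d > 0" and coercive: "\<And>v. d * (norm v)\<^sup>2 \<le> v \<bullet> (A *v v)"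
    and eq: "A *v x = b"
  shows "norm x \<le> norm b / d" and "x \<bullet> b \<le> (norm b)\<^sup>2 / d"
proof -
  have "d * (norm x)\<^sup>2 \<le> norm x * norm b"
    using coercive[of x] eq norm_cauchy_schwarz[of x b] by simp
  then have "d * norm x \<le> norm b"
    by (cases "norm x = 0") (auto simp: power2_eq_square mult.commute mult.left_commute)
  then show bound: "norm x \<le> norm b / d" using d by (simp add: field_simps)
  have "x \<bullet> b \<le> norm x * norm b" by (rule norm_cauchy_schwarz)
  also have "\<dots> \<le> norm b / d * norm b" using mult_right_mono[OF bound norm_ge_zero] .
  finally show "x \<bullet> b \<le> (norm b)\<^sup>2 / d" by (simp add: power2_eq_square)
qed

lemma ridge_matrix_coercive:
  assumes "lam \<ge> 0" and "d * (norm v)\<^sup>2 \<le> (\<Sum>j\<in>S. (v \<bullet> z j)\<^sup>2)"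
  shows "d * (norm v)\<^sup>2 \<le> v \<bullet> (ridge_matrix lam z S *v v)"
  using assms by (simp add: inner_ridge_matrix_mulv add_increasing2)

lemma ridge_coef_solves:
  assumes "lam \<ge> 0" and "d > 0" and "\<And>v. d * (norm v)\<^sup>2 \<le> (\<Sum>j\<in>S. (v \<bullet> z j)\<^sup>2)"
  shows "ridge_matrix lam z S *v ridge_coef lam z y S = ridge_rhs z y S"
  unfolding ridge_coef_eq using assms by (intro coercive_matrix_inv_mulv ridge_matrix_coercive)

lemma ridge_fit_sum_sq_le:
  assumes lam: "lam \<ge> 0" and d: "d > 0"
    and lb: "\<And>v. d * (norm v)\<^sup>2 \<le> (\<Sum>j\<in>S. (v \<bullet> z j)\<^sup>2)"
  shows "(\<Sum>i\<in>S. (z i \<bullet> ridge_coef lam z y S)\<^sup>2) \<le> (norm (ridge_rhs z y S))\<^sup>2 / d"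
proof -
  define \<beta> where "\<beta> = ridge_coef lam z y S"
  have sol: "ridge_matrix lam z S *v \<beta> = ridge_rhs z y S"
    unfolding \<beta>_def by (rule ridge_coef_solves[OF lam d lb])
  have "(\<Sum>i\<in>S. (z i \<bullet> \<beta>)\<^sup>2) \<le> \<beta> \<bullet> (ridge_matrix lam z S *v \<beta>)"
    using lam by (simp add: inner_ridge_matrix_mulv inner_commute)
  also have "\<dots> \<le> (norm (ridge_rhs z y S))\<^sup>2 / d"
    unfolding sol
    by (rule coercive_solution_bounds(2)[OF d ridge_matrix_coercive[OF lam lb] sol])
  finally show ?thesis unfolding \<beta>_def .
qed

text \<open>Sherman--Morrison: if \<open>A\<^sub>i w = z\<^sub>i\<close> for the ridge matrix \<open>A\<^sub>i\<close> without row \<open>i\<close>, the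
  leave-one-out coefficient is \<open>\<beta> + (\<hat>y\<^sub>i - y\<^sub>i) w\<close>; and \<open>\<bar>z\<^sub>i \<bullet> w\<bar> \<le> 2 \<parallel>z\<^sub>i\<parallel>\<^sup>2 / d\<close> because
  removing row \<open>i\<close> costs at most \<open>d / 2\<close> of coercivity.\<close>
lemma ridge_loo_fit_diff_le:
  assumes fin: "finite S" and lam: "lam \<ge> 0" and d: "d > 0"
    and lb: "\<And>v. d * (norm v)\<^sup>2 \<le> (\<Sum>j\<in>S. (v \<bullet> z j)\<^sup>2)"
    and i: "i \<in> S" and zi: "(norm (z i))\<^sup>2 \<le> d / 2"
  shows "\<bar>z i \<bullet> ridge_coef lam z y (S - {i}) - z i \<bullet> ridge_coef lam z y S\<bar>
         \<le> 2 * (norm (z i))\<^sup>2 / d * \<bar>z i \<bullet> ridge_coef lam z y S - y i\<bar>"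
proof -
  let ?A = "ridge_matrix lam z S" and ?Ai = "ridge_matrix lam z (S - {i})"
  have d2: "d / 2 > 0" using d by simp
  have lbi: "d / 2 * (norm v)\<^sup>2 \<le> (\<Sum>j\<in>S - {i}. (v \<bullet> z j)\<^sup>2)" for v
  proof -
    have "(v \<bullet> z i)\<^sup>2 \<le> (norm v)\<^sup>2 * (norm (z i))\<^sup>2"
      using Cauchy_Schwarz_ineq[of v "z i"] by (simp add: power2_norm_eq_inner)
    also have "\<dots> \<le> (norm v)\<^sup>2 * (d / 2)" using mult_left_mono[OF zi zero_le_power2] .
    finally show ?thesis using lb[of v] sum.remove[OF fin i, of "\<lambda>j. (v \<bullet> z j)\<^sup>2"]
      by (simp add: algebra_simps)
  qed
  have Ai_coercive: "d / 2 * (norm v)\<^sup>2 \<le> v \<bullet> (?Ai *v v)" for v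
    by (rule ridge_matrix_coercive[OF lam lbi])
  define \<beta> where "\<beta> = ridge_coef lam z y S"
  define \<beta>i where "\<beta>i = ridge_coef lam z y (S - {i})"
  define w where "w = matrix_inv ?Ai *v z i"
  define yh where "yh = z i \<bullet> \<beta>"
  have sol: "?A *v \<beta> = ridge_rhs z y S"
    unfolding \<beta>_def by (rule ridge_coef_solves[OF lam d lb])
  have soli: "?Ai *v \<beta>i = ridge_rhs z y (S - {i})"
    unfolding \<beta>i_def by (rule ridge_coef_solves[OF lam d2 lbi])
  have solw: "?Ai *v w = z i"
    unfolding w_def by (rule coercive_matrix_inv_mulv[OF d2 Ai_coercive])
  have A_eq: "?A = ?Ai + outerp (z i)"
    unfolding ridge_matrix_def by (simp add: sum.remove[OF fin i] add_ac)
  have rhs_eq: "ridge_rhs z y S = ridge_rhs z y (S - {i}) + y i *\<^sub>R z i"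
    unfolding ridge_rhs_def by (simp add: sum.remove[OF fin i] add_ac)
  have "?A *v \<beta> = ?Ai *v \<beta> + yh *\<^sub>R z i"
    unfolding A_eq by (simp add: matrix_vector_mult_add_rdistrib outerp_mulv yh_def)
  then have "?Ai *v (\<beta> + (yh - y i) *\<^sub>R w) = ridge_rhs z y (S - {i})"
    using sol by (simp add: rhs_eq solw algebra_simps)
  then have "\<beta>i = \<beta> + (yh - y i) *\<^sub>R w"
    using soli by (auto intro: coercive_matrix_mulv_inj[OF d2 Ai_coercive])
  then have diff: "z i \<bullet> \<beta>i - z i \<bullet> \<beta> = (yh - y i) * (z i \<bullet> w)"
    by (simp add: inner_add_right)
  have "\<bar>z i \<bullet> w\<bar> \<le> norm (z i) * (norm (z i) / (d / 2))"
    using Cauchy_Schwarz_ineq2[of "z i" w] coercive_solution_bounds(1)[OF d2 Ai_coercive solw]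
    by (meson mult_left_mono norm_ge_zero order_trans)
  then have "\<bar>z i \<bullet> w\<bar> \<le> 2 * (norm (z i))\<^sup>2 / d" by (simp add: power2_eq_square mult_ac)
  then have "\<bar>z i \<bullet> \<beta>i - z i \<bullet> \<beta>\<bar> \<le> \<bar>yh - y i\<bar> * (2 * (norm (z i))\<^sup>2 / d)"
    unfolding diff abs_mult by (rule mult_left_mono) simp
  then show ?thesis unfolding \<beta>_def \<beta>i_def yh_def by (simp add: mult.commute)
qed

lemma sq_le_of_abs_le_residual:
  fixes a b s e g \<gamma> :: real
  assumes diff: "\<bar>a - b\<bar> \<le> g * \<bar>b - (s + e)\<bar>" and g: "0 \<le> g" "g \<le> \<gamma>" "\<gamma> \<le> 1"
  shows "(a - b)\<^sup>2 \<le> \<gamma> * (2 * b\<^sup>2 + 4 * s\<^sup>2) + 4 * \<gamma> * g * e\<^sup>2"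
proof -
  have "(a - b)\<^sup>2 \<le> g\<^sup>2 * (b - (s + e))\<^sup>2"
    using power_mono[OF diff abs_ge_zero, of 2] by (simp add: power_mult_distrib)
  also have "\<dots> \<le> g\<^sup>2 * (2 * b\<^sup>2 + 4 * s\<^sup>2) + 4 * (g\<^sup>2 * e\<^sup>2)"
    using mult_left_mono[OF order_trans[OF square_diff_le[of b "s + e"]], of "2 * b\<^sup>2 + 4 * s\<^sup>2 + 4 * e\<^sup>2"
        "g\<^sup>2"] square_add_le[of s e]
    by (simp add: algebra_simps)
  also have "\<dots> \<le> \<gamma> * (2 * b\<^sup>2 + 4 * s\<^sup>2) + 4 * (\<gamma> * g * e\<^sup>2)"
  proof -
    have g2: "g\<^sup>2 \<le> \<gamma> * g" using g by (simp add: power2_eq_square mult_right_mono)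
    also have "\<dots> \<le> \<gamma>" using g by (simp add: mult_left_le)
    finally show ?thesis using g2 by (intro add_mono mult_right_mono mult_left_mono) auto
  qed
  finally show ?thesis by (simp add: mult.assoc)
qed

lemma ridge_fit_energy_le:
  fixes z :: "nat \<Rightarrow> real^'q" and s e :: "nat \<Rightarrow> real"
  assumes lam: "lam \<ge> 0" and c: "c > 0" and n: "n > 0"
    and gram: "\<And>v. c * real n * (norm v)\<^sup>2 \<le> (\<Sum>j<n. (v \<bullet> z j)\<^sup>2)"
    and signal: "(\<Sum>j<n. (s j)\<^sup>2) \<le> B"
    and rows: "(\<Sum>j<n. (norm (z j))\<^sup>2) \<le> Kz * real n"
    and noise: "(norm (\<Sum>j<n. e j *\<^sub>R z j))\<^sup>2 \<le> K * real n"
  shows "(\<Sum>i<n. (z i \<bullet> ridge_coef lam z (\<lambda>j. s j + e j) {..<n})\<^sup>2) \<le> (2 * B * Kz + 2 * K) / c"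
proof -
  have B: "0 \<le> B" using signal order_trans[OF sum_nonneg] by (metis zero_le_power2)
  have "ridge_rhs z (\<lambda>j. s j + e j) {..<n} = (\<Sum>j<n. s j *\<^sub>R z j) + (\<Sum>j<n. e j *\<^sub>R z j)"
    by (simp add: ridge_rhs_def scaleR_add_left sum.distrib)
  then have "(norm (ridge_rhs z (\<lambda>j. s j + e j) {..<n}))\<^sup>2
      \<le> 2 * (norm (\<Sum>j<n. s j *\<^sub>R z j))\<^sup>2 + 2 * (norm (\<Sum>j<n. e j *\<^sub>R z j))\<^sup>2"
    by (simp only: norm_add_sq_le)
  moreover have "(norm (\<Sum>j<n. s j *\<^sub>R z j))\<^sup>2 \<le> B * (Kz * real n)"
    by (rule order_trans[OF norm_sum_scaleR_sq_le mult_mono[OF signal rows B]]) (simp add: sum_nonneg)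
  ultimately have rhs: "(norm (ridge_rhs z (\<lambda>j. s j + e j) {..<n}))\<^sup>2 \<le> (2 * B * Kz + 2 * K) * real n"
    using noise by (simp add: algebra_simps)
  have "(\<Sum>i<n. (z i \<bullet> ridge_coef lam z (\<lambda>j. s j + e j) {..<n})\<^sup>2)
      \<le> (norm (ridge_rhs z (\<lambda>j. s j + e j) {..<n}))\<^sup>2 / (c * real n)"
    using c n gram by (intro ridge_fit_sum_sq_le[OF lam]) auto
  also have "\<dots> \<le> (2 * B * Kz + 2 * K) * real n / (c * real n)"
    by (rule divide_right_mono[OF rhs]) (use c n in simp)
  also have "\<dots> = (2 * B * Kz + 2 * K) / c" using n by simp
  finally show ?thesis .
qed

lemma ridge_loo_fit_diff_energy_le:
  fixes z :: "nat \<Rightarrow> real^'q" and s e :: "nat \<Rightarrow> real"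
  assumes lam: "lam \<ge> 0" and c: "c > 0" and n: "n > 0"
    and gram: "\<And>v. c * real n * (norm v)\<^sup>2 \<le> (\<Sum>j<n. (v \<bullet> z j)\<^sup>2)"
    and row_max: "\<And>j. j < n \<Longrightarrow> (norm (z j))\<^sup>2 \<le> \<rho> * real n" and \<rho>: "0 \<le> \<rho>" "\<rho> \<le> c / 2"
    and fit: "(\<Sum>i<n. (z i \<bullet> ridge_coef lam z (\<lambda>j. s j + e j) {..<n})\<^sup>2) \<le> W"
    and signal: "(\<Sum>j<n. (s j)\<^sup>2) \<le> B"
    and noise_rows: "(\<Sum>j<n. (norm (z j))\<^sup>2 * (e j)\<^sup>2) \<le> K * real n"
  defines "yh \<equiv> \<lambda>i. z i \<bullet> ridge_coef lam z (\<lambda>j. s j + e j) {..<n}"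
    and "yt \<equiv> \<lambda>i. z i \<bullet> ridge_coef lam z (\<lambda>j. s j + e j) ({..<n} - {i})"
  shows "(\<Sum>i<n. (yt i - yh i)\<^sup>2) \<le> 2 * \<rho> / c * (2 * W + 4 * B + 8 * K / c)"
proof -
  define d where "d = c * real n"
  have d: "d > 0" using c n by (simp add: d_def)
  have lb: "d * (norm v)\<^sup>2 \<le> (\<Sum>j<n. (v \<bullet> z j)\<^sup>2)" for v using gram by (simp add: d_def)
  define \<gamma> where "\<gamma> = 2 * \<rho> / c"
  have \<gamma>: "\<gamma> \<le> 1" using \<rho> c by (simp add: \<gamma>_def)
  have pointwise: "(yt i - yh i)\<^sup>2 \<le> \<gamma> * (2 * (yh i)\<^sup>2 + 4 * (s i)\<^sup>2 + 8 / d * ((norm (z i))\<^sup>2 * (e i)\<^sup>2))"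
    if i: "i < n" for i
  proof -
    have "2 * (norm (z i))\<^sup>2 / d \<le> 2 * (\<rho> * real n) / d"
      using row_max[OF i] d by (simp add: divide_right_mono)
    then have g: "0 \<le> 2 * (norm (z i))\<^sup>2 / d" "2 * (norm (z i))\<^sup>2 / d \<le> \<gamma>"
      using d n c by (simp_all add: d_def \<gamma>_def)
    have "(norm (z i))\<^sup>2 \<le> d / 2"
      using row_max[OF i] mult_right_mono[OF \<rho>(2), of "real n"] by (simp add: d_def)
    then have "\<bar>yt i - yh i\<bar> \<le> 2 * (norm (z i))\<^sup>2 / d * \<bar>yh i - (s i + e i)\<bar>"
      unfolding yt_def yh_def using i by (intro ridge_loo_fit_diff_le[OF _ lam d lb]) auto
    from sq_le_of_abs_le_residual[OF this g \<gamma>]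
    show ?thesis by (simp add: algebra_simps)
  qed
  have "(\<Sum>i<n. (yt i - yh i)\<^sup>2)
      \<le> (\<Sum>i<n. \<gamma> * (2 * (yh i)\<^sup>2 + 4 * (s i)\<^sup>2 + 8 / d * ((norm (z i))\<^sup>2 * (e i)\<^sup>2)))"
    by (rule sum_mono) (use pointwise in blast)
  also have "\<dots> = \<gamma> * (2 * (\<Sum>i<n. (yh i)\<^sup>2) + 4 * (\<Sum>i<n. (s i)\<^sup>2)
      + 8 / d * (\<Sum>i<n. (norm (z i))\<^sup>2 * (e i)\<^sup>2))"
    by (simp add: sum.distrib sum_distrib_left distrib_left)
  also have "\<dots> \<le> \<gamma> * (2 * W + 4 * B + 8 / d * (K * real n))"
    using fit signal noise_rows d \<rho> c unfolding yh_def
    by (intro mult_left_mono add_mono) (auto simp: \<gamma>_def)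
  also have "8 / d * (K * real n) = 8 * K / c" using n c by (simp add: d_def)
  finally show ?thesis by (simp add: \<gamma>_def)
qed

section \<open>The Gram matrix of augmented noisy rows\<close>

lemma sum_UNIV_option: "(\<Sum>x\<in>(UNIV::'p::finite option set). f x) = f None + (\<Sum>k\<in>UNIV. f (Some k))"
  by (simp add: UNIV_option_conv sum.reindex)

definition vec_tail :: "real^('p::finite option) \<Rightarrow> real^'p" where
  "vec_tail v = (\<chi> k. v $ Some k)"

lemma inner_aug: "v \<bullet> aug u = v $ None + vec_tail v \<bullet> u"
  by (simp add: inner_vec_def aug_def vec_tail_def sum_UNIV_option)

lemma norm_sq_eq_sum_components: "(norm (x::real^'n))\<^sup>2 = (\<Sum>k\<in>UNIV. (x $ k)\<^sup>2)"
  unfolding power2_norm_eq_inner by (simp add: inner_vec_def power2_eq_square)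

lemma norm_sq_option_vec: "(norm v)\<^sup>2 = (v $ None)\<^sup>2 + (norm (vec_tail v))\<^sup>2"
  by (simp add: norm_sq_eq_sum_components sum_UNIV_option vec_tail_def)

lemma norm_sq_aug: "(norm (aug u))\<^sup>2 = 1 + (norm u)\<^sup>2"
  by (simp add: norm_sq_eq_sum_components sum_UNIV_option aug_def)

lemma quadratic_form_abs_le:
  fixes A :: "real^'n^'n"
  shows "\<bar>w \<bullet> (A *v w)\<bar> \<le> (norm w)\<^sup>2 * (\<Sum>k\<in>UNIV. \<Sum>l\<in>UNIV. \<bar>A $ k $ l\<bar>)"
proof -
  have "\<bar>w \<bullet> (A *v w)\<bar> = \<bar>\<Sum>k\<in>UNIV. \<Sum>l\<in>UNIV. w $ k * A $ k $ l * w $ l\<bar>"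
    by (simp add: inner_vec_def matrix_vector_mult_def sum_distrib_left mult.assoc)
  also have "\<dots> \<le> (\<Sum>k\<in>UNIV. \<Sum>l\<in>UNIV. \<bar>w $ k * A $ k $ l * w $ l\<bar>)"
    by (rule order_trans[OF sum_abs sum_mono[OF sum_abs]])
  also have "\<dots> \<le> (\<Sum>k\<in>UNIV. \<Sum>l\<in>UNIV. (norm w)\<^sup>2 * \<bar>A $ k $ l\<bar>)"
  proof (intro sum_mono)
    fix k l
    have "\<bar>w $ k\<bar> * \<bar>w $ l\<bar> \<le> norm w * norm w"
      by (intro mult_mono component_le_norm_cart) auto
    then have "\<bar>w $ k\<bar> * \<bar>w $ l\<bar> * \<bar>A $ k $ l\<bar> \<le> (norm w)\<^sup>2 * \<bar>A $ k $ l\<bar>"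
      by (simp add: power2_eq_square mult_right_mono)
    then show "\<bar>w $ k * A $ k $ l * w $ l\<bar> \<le> (norm w)\<^sup>2 * \<bar>A $ k $ l\<bar>"
      by (simp add: abs_mult mult_ac)
  qed
  also have "\<dots> = (norm w)\<^sup>2 * (\<Sum>k\<in>UNIV. \<Sum>l\<in>UNIV. \<bar>A $ k $ l\<bar>)"
    by (simp add: sum_distrib_left)
  finally show ?thesis .
qed

definition outer_prod :: "real^'n \<Rightarrow> real^'n \<Rightarrow> real^'n^'n" where
  "outer_prod x y = (\<chi> k l. x $ k * y $ l)"

lemma outer_prod_mulv: "outer_prod x y *v w = (y \<bullet> w) *\<^sub>R x"
  by (simp add: outer_prod_def matrix_vector_mult_def inner_vec_def vec_eq_iff sum_distrib_left mult_ac)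

text \<open>For a direction with intercept \<open>a\<close> and slope part of norm \<open>\<nu>\<close>: the mean rows shift the
  intercept by some \<open>t\<close> with \<open>\<bar>t\<bar> \<le> M \<nu>\<close>, while the noise variance \<open>s\<close> penalises the slope part.\<close>
lemma shifted_quadratic_lower_bound:
  fixes a t \<nu> s M :: real
  assumes t: "\<bar>t\<bar> \<le> M * \<nu>" and \<nu>: "0 \<le> \<nu>" and s: "s > 0" and M: "M \<ge> 0"
  shows "min (s / (4 * (M\<^sup>2 + s))) (s / 2) * (a\<^sup>2 + \<nu>\<^sup>2) \<le> (a + t)\<^sup>2 + s * \<nu>\<^sup>2"
proof -
  define L where "L = s / (2 * (M\<^sup>2 + s))"
  have pos: "M\<^sup>2 + s > 0" using s by (simp add: add_nonneg_pos)
  have L: "0 \<le> L" "L \<le> 1" "L * M\<^sup>2 \<le> s / 2"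
    unfolding L_def using pos s by (auto simp: field_simps)
  have t2: "t\<^sup>2 \<le> M\<^sup>2 * \<nu>\<^sup>2"
    using power_mono[OF t abs_ge_zero, of 2] by (simp add: power_mult_distrib)
  have "L * a\<^sup>2 \<le> L * (2 * (a + t)\<^sup>2 + 2 * t\<^sup>2)"
    using mult_left_mono[OF square_diff_le[of "a + t" t] L(1)] by simp
  also have "\<dots> \<le> 2 * (a + t)\<^sup>2 + 2 * (L * M\<^sup>2) * \<nu>\<^sup>2"
    using mult_right_mono[OF L(2), of "(a + t)\<^sup>2"] mult_left_mono[OF t2 L(1)]
    by (simp add: algebra_simps)
  also have "\<dots> \<le> 2 * (a + t)\<^sup>2 + s * \<nu>\<^sup>2"
    using mult_right_mono[OF L(3), of "\<nu>\<^sup>2"] by simp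
  finally have main: "L * a\<^sup>2 \<le> 2 * (a + t)\<^sup>2 + s * \<nu>\<^sup>2" .
  define c where "c = min (s / (4 * (M\<^sup>2 + s))) (s / 2)"
  have "c \<le> L / 2" unfolding c_def L_def by (rule order_trans[OF min.cobounded1]) simp
  moreover have "c \<le> s / 2" unfolding c_def by (rule min.cobounded2)
  ultimately have "c * a\<^sup>2 \<le> L * a\<^sup>2 / 2" "c * \<nu>\<^sup>2 \<le> s * \<nu>\<^sup>2 / 2"
    using mult_right_mono[of c "L / 2" "a\<^sup>2"] mult_right_mono[of c "s / 2" "\<nu>\<^sup>2"] by auto
  then show ?thesis using main unfolding c_def[symmetric] by (simp add: distrib_left)
qed

text \<open>Expanding \<open>\<Sum>\<^sub>j (v \<bullet> [1, u\<^sub>j + e\<^sub>j])\<^sup>2\<close> for \<open>v = (a, w)\<close>: the deterministic part is at least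
  \<open>n (a + w \<bullet> mean u)\<^sup>2\<close> by Cauchy--Schwarz, the noise contributes \<open>n s \<parallel>w\<parallel>\<^sup>2\<close>, and the remaining
  terms are controlled by the centred sums \<open>\<Sum>\<^sub>j e\<^sub>j\<close>, \<open>\<Sum>\<^sub>j u\<^sub>j e\<^sub>j\<^sup>T\<close> and \<open>\<Sum>\<^sub>j (e\<^sub>j e\<^sub>j\<^sup>T - s I)\<close>.\<close>
lemma augmented_gram_lower_bound:
  fixes u e :: "nat \<Rightarrow> real^'p" and v :: "real^('p option)" and s :: real
  assumes n: "n > 0"
  shows "real n * ((v $ None + vec_tail v \<bullet> ((1 / real n) *\<^sub>R (\<Sum>j<n. u j)))\<^sup>2 + s * (norm (vec_tail v))\<^sup>2)
         - (norm v)\<^sup>2 * (2 * (\<Sum>l\<in>UNIV. \<bar>\<Sum>j<n. e j $ l\<bar>)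
              + 2 * (\<Sum>k\<in>UNIV. \<Sum>l\<in>UNIV. \<bar>\<Sum>j<n. u j $ k * e j $ l\<bar>)
              + (\<Sum>k\<in>UNIV. \<Sum>l\<in>UNIV. \<bar>\<Sum>j<n. e j $ k * e j $ l - (if k = l then s else 0)\<bar>))
         \<le> (\<Sum>j<n. (v \<bullet> aug (u j + e j))\<^sup>2)"
proof -
  define a where "a = v $ None"
  define w where "w = vec_tail v"
  define t where "t j = a + w \<bullet> u j" for j
  define r where "r j = w \<bullet> e j" for j
  define U where "U = (\<Sum>j<n. e j)"
  define V where "V = (\<Sum>j<n. outer_prod (u j) (e j))"
  define D where "D = (\<Sum>j<n. outerp (e j)) - (real n * s) *\<^sub>R mat 1"
  define ub where "ub = (1 / real n) *\<^sub>R (\<Sum>j<n. u j)"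
  have "(norm w)\<^sup>2 \<le> (norm v)\<^sup>2" using norm_sq_option_vec[of v] by (simp add: w_def)
  then have w_le: "norm w \<le> norm v" by (simp add: power_mono_iff)
  have a_le: "\<bar>a\<bar> \<le> norm v" unfolding a_def by (rule component_le_norm_cart)
  have "v \<bullet> aug (u j + e j) = t j + r j" for j
    by (simp add: inner_aug t_def r_def a_def w_def inner_add_right)
  then have expand: "(\<Sum>j<n. (v \<bullet> aug (u j + e j))\<^sup>2)
      = (\<Sum>j<n. (t j)\<^sup>2) + 2 * (\<Sum>j<n. t j * r j) + (\<Sum>j<n. (r j)\<^sup>2)"
    by (simp add: power2_sum sum.distrib sum_distrib_left mult.assoc)
  have "(\<Sum>j<n. t j) / real n = a + w \<bullet> ub"
    using n by (simp add: t_def ub_def sum.distrib inner_sum_right field_simps)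
  then have mean_part: "real n * (a + w \<bullet> ub)\<^sup>2 \<le> (\<Sum>j<n. (t j)\<^sup>2)"
    using mean_sq_le_sum_sq[of n t] by simp
  have "(\<Sum>j<n. t j * r j) = (\<Sum>j<n. a * (w \<bullet> e j) + w \<bullet> (outer_prod (u j) (e j) *v w))"
    by (intro sum.cong refl) (simp add: t_def r_def outer_prod_mulv distrib_right inner_commute)
  also have "\<dots> = a * (w \<bullet> U) + w \<bullet> (V *v w)"
    by (simp add: sum.distrib U_def V_def sum_matrix_vector_mult inner_sum_right sum_distrib_left)
  finally have cross: "(\<Sum>j<n. t j * r j) = a * (w \<bullet> U) + w \<bullet> (V *v w)" .
  have cross1: "\<bar>a * (w \<bullet> U)\<bar> \<le> (norm v)\<^sup>2 * (\<Sum>l\<in>UNIV. \<bar>\<Sum>j<n. e j $ l\<bar>)"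
  proof -
    have "\<bar>a * (w \<bullet> U)\<bar> \<le> norm v * (norm w * norm U)"
      unfolding abs_mult by (intro mult_mono a_le Cauchy_Schwarz_ineq2) auto
    also have "\<dots> \<le> norm v * (norm v * (\<Sum>l\<in>UNIV. \<bar>U $ l\<bar>))"
      by (intro mult_left_mono mult_mono w_le norm_le_l1_cart) auto
    finally show ?thesis by (simp add: U_def power2_eq_square mult.assoc)
  qed
  have cross2: "\<bar>w \<bullet> (V *v w)\<bar> \<le> (norm v)\<^sup>2 * (\<Sum>k\<in>UNIV. \<Sum>l\<in>UNIV. \<bar>\<Sum>j<n. u j $ k * e j $ l\<bar>)"
  proof -
    have "\<bar>w \<bullet> (V *v w)\<bar> \<le> (norm w)\<^sup>2 * (\<Sum>k\<in>UNIV. \<Sum>l\<in>UNIV. \<bar>V $ k $ l\<bar>)"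
      by (rule quadratic_form_abs_le)
    also have "\<dots> \<le> (norm v)\<^sup>2 * (\<Sum>k\<in>UNIV. \<Sum>l\<in>UNIV. \<bar>V $ k $ l\<bar>)"
      by (intro mult_right_mono power_mono w_le) (auto intro: sum_nonneg)
    finally show ?thesis by (simp add: V_def outer_prod_def)
  qed
  have noise_part: "(\<Sum>j<n. (r j)\<^sup>2) = real n * s * (norm w)\<^sup>2 + w \<bullet> (D *v w)"
    by (simp add: D_def matrix_vector_mult_diff_rdistrib sum_matrix_vector_mult outerp_mulv
        scaleR_mat_1_mulv inner_diff_right inner_sum_right r_def power2_eq_square inner_commute
        flip: power2_norm_eq_inner)
  have D_entry: "D $ k $ l = (\<Sum>j<n. e j $ k * e j $ l - (if k = l then s else 0))" for k l
    by (simp add: D_def outerp_def mat_def sum_subtractf)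
  have noise_err: "\<bar>w \<bullet> (D *v w)\<bar>
      \<le> (norm v)\<^sup>2 * (\<Sum>k\<in>UNIV. \<Sum>l\<in>UNIV. \<bar>\<Sum>j<n. e j $ k * e j $ l - (if k = l then s else 0)\<bar>)"
  proof -
    have "\<bar>w \<bullet> (D *v w)\<bar> \<le> (norm w)\<^sup>2 * (\<Sum>k\<in>UNIV. \<Sum>l\<in>UNIV. \<bar>D $ k $ l\<bar>)"
      by (rule quadratic_form_abs_le)
    also have "\<dots> \<le> (norm v)\<^sup>2 * (\<Sum>k\<in>UNIV. \<Sum>l\<in>UNIV. \<bar>D $ k $ l\<bar>)"
      by (intro mult_right_mono power_mono w_le) (auto intro: sum_nonneg)
    finally show ?thesis by (simp add: D_entry)
  qed
  show ?thesis
    unfolding expand cross noise_part a_def[symmetric] w_def[symmetric] ub_def[symmetric]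
    using mean_part cross1 cross2 noise_err by (simp add: algebra_simps abs_le_iff)
qed

section \<open>Criteria for \<open>o\<^sub>P(1)\<close> and \<open>O\<^sub>P(1)\<close>\<close>

lemma outer_prob_le_measure:
  assumes "A \<in> sets M" "S \<inter> space M \<subseteq> A"
  shows "outer_prob M S \<le> measure M A"
  unfolding outer_prob_def
  by (rule cInf_lower) (use assms in \<open>auto intro!: bdd_belowI[where m=0]\<close>)

lemma outer_prob_nonneg: "0 \<le> outer_prob M S"
  unfolding outer_prob_def by (rule cInf_greatest) auto

lemma small_oP_if_exceptional_sets:
  assumes "\<And>\<delta> \<eta>. \<delta> > 0 \<Longrightarrow> \<eta> > 0 \<Longrightarrow> eventually (\<lambda>n. \<exists>A\<in>sets M. measure M A < \<eta>
             \<and> (\<forall>\<omega>\<in>space M - A. \<bar>Y n \<omega>\<bar> \<le> \<delta>)) sequentially"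
  shows "small_oP M Y"
  unfolding small_oP_def
proof (intro allI impI order_tendstoI)
  fix \<delta> a :: real
  show "a < 0 \<Longrightarrow> eventually (\<lambda>n. a < outer_prob M {\<omega>\<in>space M. \<delta> < \<bar>Y n \<omega>\<bar>}) sequentially"
    using outer_prob_nonneg by (intro always_eventually allI) (rule less_le_trans)
  assume "\<delta> > 0" "0 < a"
  from assms[OF this] show "eventually (\<lambda>n. outer_prob M {\<omega>\<in>space M. \<delta> < \<bar>Y n \<omega>\<bar>} < a) sequentially"
  proof eventually_elim
    case (elim n)
    then obtain A where "A \<in> sets M" "measure M A < a" "\<forall>\<omega>\<in>space M - A. \<bar>Y n \<omega>\<bar> \<le> \<delta>" by blast
    then show ?case using outer_prob_le_measure[of A M "{\<omega>\<in>space M. \<delta> < \<bar>Y n \<omega>\<bar>}"] by force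
  qed
qed

lemma big_OP_if_exceptional_sets:
  assumes "\<And>\<eta>. \<eta> > 0 \<Longrightarrow> \<exists>K. eventually (\<lambda>n. \<exists>A\<in>sets M. measure M A < \<eta>
             \<and> (\<forall>\<omega>\<in>space M - A. \<bar>Y n \<omega>\<bar> \<le> K)) sequentially"
  shows "big_OP M Y"
  unfolding big_OP_def
proof (intro allI impI)
  fix \<eta> :: real assume "\<eta> > 0"
  then obtain K N where N: "\<And>n. n \<ge> N \<Longrightarrow> \<exists>A\<in>sets M. measure M A < \<eta>
      \<and> (\<forall>\<omega>\<in>space M - A. \<bar>Y n \<omega>\<bar> \<le> K)"
    using assms unfolding eventually_sequentially by blast
  have "outer_prob M {\<omega>\<in>space M. K < \<bar>Y n \<omega>\<bar>} < \<eta>" if n: "n \<ge> N" for n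
  proof -
    obtain A where "A \<in> sets M" "measure M A < \<eta>" "\<forall>\<omega>\<in>space M - A. \<bar>Y n \<omega>\<bar> \<le> K"
      using N[OF n] by blast
    then show ?thesis using outer_prob_le_measure[of A M "{\<omega>\<in>space M. K < \<bar>Y n \<omega>\<bar>}"] by force
  qed
  then show "\<exists>K N. \<forall>n\<ge>N. outer_prob M {\<omega>\<in>space M. K < \<bar>Y n \<omega>\<bar>} < \<eta>" by blast
qed

section \<open>Second moments of sums of independent Gaussian noise\<close>

lemma integrable_mult_of_squares:
  fixes f g :: "'w \<Rightarrow> real"
  assumes f: "f \<in> borel_measurable M" and g: "g \<in> borel_measurable M"
    and "integrable M (\<lambda>\<omega>. (f \<omega>)\<^sup>2)" "integrable M (\<lambda>\<omega>. (g \<omega>)\<^sup>2)"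
  shows "integrable M (\<lambda>\<omega>. f \<omega> * g \<omega>)"
proof (rule Bochner_Integration.integrable_bound[where f="\<lambda>\<omega>. (f \<omega>)\<^sup>2 + (g \<omega>)\<^sup>2"])
  show "integrable M (\<lambda>\<omega>. (f \<omega>)\<^sup>2 + (g \<omega>)\<^sup>2)" using assms by simp
  show "(\<lambda>\<omega>. f \<omega> * g \<omega>) \<in> borel_measurable M" using f g by simp
  show "AE \<omega> in M. norm (f \<omega> * g \<omega>) \<le> norm ((f \<omega>)\<^sup>2 + (g \<omega>)\<^sup>2)"
    using abs_mult_le_sum_squares by simp
qed

lemma dominated_integrable_integral_le:
  fixes f g :: "'a \<Rightarrow> real"
  assumes f: "f \<in> borel_measurable M" and g: "integrable M g"
    and "\<And>x. 0 \<le> f x" and le: "\<And>x. f x \<le> g x"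
  shows "integrable M f" and "integral\<^sup>L M f \<le> integral\<^sup>L M g"
proof -
  show int: "integrable M f"
    by (rule Bochner_Integration.integrable_bound[OF g f])
      (use assms in \<open>auto intro!: AE_I2 order_trans[OF _ abs_ge_self]\<close>)
  show "integral\<^sup>L M f \<le> integral\<^sup>L M g" by (rule integral_mono[OF int g le])
qed

context prob_space
begin

lemma normal_moments:
  assumes s: "s > 0" and G: "distributed M lborel G (normal_density 0 s)"
  shows "G \<in> borel_measurable M" and "integrable M (\<lambda>\<omega>. G \<omega> ^ k)"
    and "expectation G = 0" and "expectation (\<lambda>\<omega>. (G \<omega>)\<^sup>2) = s\<^sup>2"
    and "expectation (\<lambda>\<omega>. G \<omega> ^ 4) = 3 * s ^ 4"
proof -
  show "G \<in> borel_measurable M" using distributed_measurable[OF G] by simp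
  show "integrable M (\<lambda>\<omega>. G \<omega> ^ k)"
    using distributed_integrable[OF G, of "\<lambda>x. x ^ k"]
      integrable_normal_moment[OF s, where \<mu>=0 and k=k] by simp
  show "expectation G = 0" using normal_distributed_expectation[OF s G] .
  have even_moment: "expectation (\<lambda>\<omega>. G \<omega> ^ (2 * k)) = fact (2 * k) / ((2 / s\<^sup>2) ^ k * fact k)" for k
    using distributed_integral[OF G, of "\<lambda>x. x ^ (2 * k)", symmetric]
      integral_normal_moment_even[OF s, where \<mu>=0 and k=k] by simp
  show "expectation (\<lambda>\<omega>. (G \<omega>)\<^sup>2) = s\<^sup>2" using even_moment[of 1] by simp
  show "expectation (\<lambda>\<omega>. G \<omega> ^ 4) = 3 * s ^ 4"
    using even_moment[of 2] by (simp add: fact_numeral power2_eq_square field_simps power4_eq_xxxx)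
qed

lemma expectation_sum_square_orthogonal:
  fixes Y :: "'i \<Rightarrow> 'a \<Rightarrow> real"
  assumes fin: "finite S" and meas: "\<And>i. i \<in> S \<Longrightarrow> Y i \<in> borel_measurable M"
    and sq: "\<And>i. i \<in> S \<Longrightarrow> integrable M (\<lambda>\<omega>. (Y i \<omega>)\<^sup>2)"
    and orth: "\<And>i j. i \<in> S \<Longrightarrow> j \<in> S \<Longrightarrow> i \<noteq> j \<Longrightarrow> expectation (\<lambda>\<omega>. Y i \<omega> * Y j \<omega>) = 0"
  shows "integrable M (\<lambda>\<omega>. (\<Sum>i\<in>S. Y i \<omega>)\<^sup>2)"
    and "expectation (\<lambda>\<omega>. (\<Sum>i\<in>S. Y i \<omega>)\<^sup>2) = (\<Sum>i\<in>S. expectation (\<lambda>\<omega>. (Y i \<omega>)\<^sup>2))"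
proof -
  have eq: "(\<lambda>\<omega>. (\<Sum>i\<in>S. Y i \<omega>)\<^sup>2) = (\<lambda>\<omega>. \<Sum>i\<in>S. \<Sum>j\<in>S. Y i \<omega> * Y j \<omega>)"
    by (simp add: power2_eq_square sum_product)
  have int: "integrable M (\<lambda>\<omega>. Y i \<omega> * Y j \<omega>)" if "i \<in> S" "j \<in> S" for i j
    using that by (intro integrable_mult_of_squares meas sq)
  then show "integrable M (\<lambda>\<omega>. (\<Sum>i\<in>S. Y i \<omega>)\<^sup>2)" unfolding eq by fastforce
  have "expectation (\<lambda>\<omega>. (\<Sum>i\<in>S. Y i \<omega>)\<^sup>2) = (\<Sum>i\<in>S. \<Sum>j\<in>S. expectation (\<lambda>\<omega>. Y i \<omega> * Y j \<omega>))"
    unfolding eq using int by (simp add: Bochner_Integration.integrable_sum)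
  also have "\<dots> = (\<Sum>i\<in>S. \<Sum>j\<in>S. if j = i then expectation (\<lambda>\<omega>. (Y i \<omega>)\<^sup>2) else 0)"
    by (intro sum.cong refl) (auto simp: orth power2_eq_square)
  finally show "expectation (\<lambda>\<omega>. (\<Sum>i\<in>S. Y i \<omega>)\<^sup>2) = (\<Sum>i\<in>S. expectation (\<lambda>\<omega>. (Y i \<omega>)\<^sup>2))"
    using fin by simp
qed

lemma prob_ge_le_bound:
  assumes "integrable M u" "\<And>\<omega>. 0 \<le> u \<omega>" "t > 0" "expectation u \<le> C"
  shows "prob {\<omega>\<in>space M. t \<le> u \<omega>} \<le> C / t"
  using integral_Markov_inequality_measure[of M u "space M" t] divide_right_mono[OF assms(4), of t] assms
  by auto

end

locale gaussian_noise = prob_space M for M :: "'w measure" +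
  fixes E :: "nat \<Rightarrow> 'w \<Rightarrow> nat \<Rightarrow> real^'p"
    and \<epsilon> :: "nat \<Rightarrow> 'w \<Rightarrow> nat \<Rightarrow> real"
    and \<sigma> \<sigma>z :: real
  assumes sig: "\<sigma> > 0" and sigz: "\<sigma>z > 0"
    and E_normal: "\<And>n i j. i < n \<Longrightarrow>
          distributed M lborel (\<lambda>\<omega>. E n \<omega> i $ j) (normal_density 0 \<sigma>z)"
    and eps_normal: "\<And>n i. i < n \<Longrightarrow>
          distributed M lborel (\<lambda>\<omega>. \<epsilon> n \<omega> i) (normal_density 0 \<sigma>)"
    and indep: "\<And>n. indep_vars (\<lambda>_. borel)
          (\<lambda>k \<omega>. case k of Inl (i, j) \<Rightarrow> E n \<omega> i $ j | Inr i \<Rightarrow> \<epsilon> n \<omega> i)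
          (({..<n} \<times> UNIV) <+> {..<n})"
begin

text \<open>The noise is only specified for indices \<open>i < n\<close>; truncating it to \<open>0\<close> elsewhere makes
  it measurable for every index.\<close>
definition "Etr n \<omega> i = (if i < n then E n \<omega> i else 0)"
definition "\<epsilon>tr n \<omega> i = (if i < n then \<epsilon> n \<omega> i else 0)"

lemma Etr_eq: "i < n \<Longrightarrow> Etr n \<omega> i = E n \<omega> i"
  by (simp add: Etr_def)

lemma \<epsilon>tr_eq: "i < n \<Longrightarrow> \<epsilon>tr n \<omega> i = \<epsilon> n \<omega> i"
  by (simp add: \<epsilon>tr_def)

lemma Etr_moments:
  assumes "i < n"
  shows "integrable M (\<lambda>\<omega>. (Etr n \<omega> i $ k) ^ m)" and "expectation (\<lambda>\<omega>. Etr n \<omega> i $ k) = 0"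
    and "expectation (\<lambda>\<omega>. (Etr n \<omega> i $ k)\<^sup>2) = \<sigma>z\<^sup>2"
    and "expectation (\<lambda>\<omega>. (Etr n \<omega> i $ k) ^ 4) = 3 * \<sigma>z ^ 4"
  using normal_moments[OF sigz E_normal[OF assms]] assms by (simp_all add: Etr_eq)

lemma \<epsilon>tr_moments:
  assumes "i < n"
  shows "integrable M (\<lambda>\<omega>. (\<epsilon>tr n \<omega> i) ^ m)" and "expectation (\<lambda>\<omega>. \<epsilon>tr n \<omega> i) = 0"
    and "expectation (\<lambda>\<omega>. (\<epsilon>tr n \<omega> i)\<^sup>2) = \<sigma>\<^sup>2"
    and "expectation (\<lambda>\<omega>. (\<epsilon>tr n \<omega> i) ^ 4) = 3 * \<sigma> ^ 4"
  using normal_moments[OF sig eps_normal[OF assms]] assms by (simp_all add: \<epsilon>tr_eq)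

lemma measurable_Etr [measurable]: "(\<lambda>\<omega>. Etr n \<omega> i $ k) \<in> borel_measurable M"
  by (cases "i < n") (auto simp: Etr_def intro: normal_moments(1)[OF sigz E_normal])

lemma measurable_\<epsilon>tr [measurable]: "(\<lambda>\<omega>. \<epsilon>tr n \<omega> i) \<in> borel_measurable M"
  by (cases "i < n") (auto simp: \<epsilon>tr_def intro: normal_moments(1)[OF sig eps_normal])

definition "noise_restr n \<omega> A =
  restrict (\<lambda>k. case k of Inl (i, j) \<Rightarrow> E n \<omega> i $ j | Inr i \<Rightarrow> \<epsilon> n \<omega> i) A"

definition row_block :: "nat \<Rightarrow> ((nat \<times> 'p) + nat) set" where
  "row_block i = (({i} \<times> UNIV) <+> {i})"

lemma noise_restr_Inl [simp]: "Inl (i, k) \<in> A \<Longrightarrow> noise_restr n \<omega> A (Inl (i, k)) = E n \<omega> i $ k"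
  by (simp add: noise_restr_def)

lemma noise_restr_Inr [simp]: "Inr i \<in> A \<Longrightarrow> noise_restr n \<omega> A (Inr i) = \<epsilon> n \<omega> i"
  by (simp add: noise_restr_def)

lemma mem_row_block [simp]: "Inl (i, k) \<in> row_block i" "Inr i \<in> row_block i"
  by (auto simp: row_block_def intro: InlI InrI)

lemma expectation_mult_disjoint_blocks:
  assumes disj: "A \<inter> B = {}" and sub: "A \<subseteq> ({..<n} \<times> UNIV) <+> {..<n}" "B \<subseteq> ({..<n} \<times> UNIV) <+> {..<n}"
    and ga: "ga \<in> borel_measurable (PiM A (\<lambda>_. borel))"
    and gb: "gb \<in> borel_measurable (PiM B (\<lambda>_. borel))"
    and Ya: "\<And>\<omega>. Ya \<omega> = ga (noise_restr n \<omega> A)" and Yb: "\<And>\<omega>. Yb \<omega> = gb (noise_restr n \<omega> B)"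
    and "integrable M Ya" "integrable M Yb"
  shows "expectation (\<lambda>\<omega>. Ya \<omega> * Yb \<omega>) = expectation Ya * expectation (Yb :: 'w \<Rightarrow> real)"
proof (rule indep_var_lebesgue_integral)
  have "indep_var borel (ga \<circ> (\<lambda>\<omega>. noise_restr n \<omega> A)) borel (gb \<circ> (\<lambda>\<omega>. noise_restr n \<omega> B))"
    unfolding noise_restr_def by (rule indep_var_compose[OF indep_var_restrict[OF indep disj sub] ga gb])
  moreover have "Ya = ga \<circ> (\<lambda>\<omega>. noise_restr n \<omega> A)" "Yb = gb \<circ> (\<lambda>\<omega>. noise_restr n \<omega> B)"
    using Ya Yb by auto
  ultimately show "indep_var borel Ya borel Yb" by simp
qed fact+

lemma expectation_Etr_mult:
  assumes "i < n" "j < n" "(i, k) \<noteq> (j, l)"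
  shows "expectation (\<lambda>\<omega>. Etr n \<omega> i $ k * Etr n \<omega> j $ l) = 0"
proof -
  have "expectation (\<lambda>\<omega>. Etr n \<omega> i $ k * Etr n \<omega> j $ l)
      = expectation (\<lambda>\<omega>. Etr n \<omega> i $ k) * expectation (\<lambda>\<omega>. Etr n \<omega> j $ l)"
    using assms Etr_moments(1)[OF assms(1), of k 1] Etr_moments(1)[OF assms(2), of l 1]
    by (intro expectation_mult_disjoint_blocks[where A="{Inl (i, k)}" and B="{Inl (j, l)}"
        and ga="\<lambda>f. f (Inl (i, k))" and gb="\<lambda>f. f (Inl (j, l))"]) (auto simp: Etr_eq)
  then show ?thesis using Etr_moments(2)[OF assms(1)] by simp
qed

lemma expectation_\<epsilon>tr_Etr_mult:
  assumes "i < n" "j < n"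
  shows "expectation (\<lambda>\<omega>. \<epsilon>tr n \<omega> i * Etr n \<omega> j $ l) = 0"
proof -
  have "expectation (\<lambda>\<omega>. \<epsilon>tr n \<omega> i * Etr n \<omega> j $ l)
      = expectation (\<lambda>\<omega>. \<epsilon>tr n \<omega> i) * expectation (\<lambda>\<omega>. Etr n \<omega> j $ l)"
    using assms \<epsilon>tr_moments(1)[OF assms(1), of 1] Etr_moments(1)[OF assms(2), of l 1]
    by (intro expectation_mult_disjoint_blocks[where A="{Inr i}" and B="{Inl (j, l)}"
        and ga="\<lambda>f. f (Inr i)" and gb="\<lambda>f. f (Inl (j, l))"]) (auto simp: Etr_eq \<epsilon>tr_eq)
  then show ?thesis using \<epsilon>tr_moments(2)[OF assms(1)] by simp
qed

text \<open>Terms depending on distinct rows of the noise are independent, so centred ones are orthogonal.\<close>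
lemma expectation_sum_sq_row_functions:
  fixes Y :: "nat \<Rightarrow> 'w \<Rightarrow> real"
  assumes row: "\<And>j \<omega>. j < n \<Longrightarrow> Y j \<omega> = g j (noise_restr n \<omega> (row_block j))"
    and g: "\<And>j. g j \<in> borel_measurable (PiM (row_block j) (\<lambda>_. borel))"
    and meas: "\<And>j. Y j \<in> borel_measurable M"
    and sq: "\<And>j. j < n \<Longrightarrow> integrable M (\<lambda>\<omega>. (Y j \<omega>)\<^sup>2)"
    and centred: "\<And>j. j < n \<Longrightarrow> expectation (Y j) = 0"
  shows "integrable M (\<lambda>\<omega>. (\<Sum>j<n. Y j \<omega>)\<^sup>2)"
    and "expectation (\<lambda>\<omega>. (\<Sum>j<n. Y j \<omega>)\<^sup>2) = (\<Sum>j<n. expectation (\<lambda>\<omega>. (Y j \<omega>)\<^sup>2))"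
proof -
  have int: "integrable M (Y j)" if "j < n" for j
    using integrable_mult_of_squares[OF meas borel_measurable_const sq[OF that], of 1] by simp
  have "expectation (\<lambda>\<omega>. Y i \<omega> * Y j \<omega>) = 0" if "i \<in> {..<n}" "j \<in> {..<n}" "i \<noteq> j" for i j
  proof -
    have "expectation (\<lambda>\<omega>. Y i \<omega> * Y j \<omega>) = expectation (Y i) * expectation (Y j)"
      using that by (intro expectation_mult_disjoint_blocks[OF _ _ _ g g row row int int])
        (auto simp: row_block_def)
    then show ?thesis using centred that by simp
  qed
  then show "integrable M (\<lambda>\<omega>. (\<Sum>j<n. Y j \<omega>)\<^sup>2)"
    and "expectation (\<lambda>\<omega>. (\<Sum>j<n. Y j \<omega>)\<^sup>2) = (\<Sum>j<n. expectation (\<lambda>\<omega>. (Y j \<omega>)\<^sup>2))"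
    using meas sq by (auto intro: expectation_sum_square_orthogonal)
qed

lemma expectation_linear_Etr_sq:
  fixes c :: "nat \<Rightarrow> real"
  shows "integrable M (\<lambda>\<omega>. (\<Sum>j<n. c j * Etr n \<omega> j $ l)\<^sup>2)"
    and "expectation (\<lambda>\<omega>. (\<Sum>j<n. c j * Etr n \<omega> j $ l)\<^sup>2) = \<sigma>z\<^sup>2 * (\<Sum>j<n. (c j)\<^sup>2)"
proof -
  note rows = expectation_sum_sq_row_functions[where Y="\<lambda>j \<omega>. c j * Etr n \<omega> j $ l"
      and g="\<lambda>j f. c j * f (Inl (j, l))"]
  have sq: "integrable M (\<lambda>\<omega>. (c j * Etr n \<omega> j $ l)\<^sup>2)" if "j < n" for j
    using Etr_moments(1)[OF that, of l 2] by (simp add: power_mult_distrib)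
  show "integrable M (\<lambda>\<omega>. (\<Sum>j<n. c j * Etr n \<omega> j $ l)\<^sup>2)"
    using sq Etr_moments(2) by (intro rows) (auto simp: Etr_eq)
  have "expectation (\<lambda>\<omega>. (\<Sum>j<n. c j * Etr n \<omega> j $ l)\<^sup>2)
      = (\<Sum>j<n. expectation (\<lambda>\<omega>. (c j * Etr n \<omega> j $ l)\<^sup>2))"
    using sq Etr_moments(2) by (intro rows) (auto simp: Etr_eq)
  also have "\<dots> = (\<Sum>j<n. (c j)\<^sup>2 * \<sigma>z\<^sup>2)"
    by (rule sum.cong) (auto simp: power_mult_distrib Etr_moments(3))
  finally show "expectation (\<lambda>\<omega>. (\<Sum>j<n. c j * Etr n \<omega> j $ l)\<^sup>2) = \<sigma>z\<^sup>2 * (\<Sum>j<n. (c j)\<^sup>2)"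
    by (simp add: sum_distrib_left mult.commute)
qed

lemma expectation_Etr_cov_dev_sq_le:
  fixes k l :: 'p
  defines "d \<equiv> if k = l then \<sigma>z\<^sup>2 else 0"
  shows "integrable M (\<lambda>\<omega>. (\<Sum>j<n. Etr n \<omega> j $ k * Etr n \<omega> j $ l - d)\<^sup>2)"
    and "expectation (\<lambda>\<omega>. (\<Sum>j<n. Etr n \<omega> j $ k * Etr n \<omega> j $ l - d)\<^sup>2) \<le> 14 * real n * \<sigma>z ^ 4"
proof -
  define Y where "Y j \<omega> = Etr n \<omega> j $ k * Etr n \<omega> j $ l - d" for j \<omega>
  define B where "B j \<omega> = 2 * (Etr n \<omega> j $ k) ^ 4 + 2 * (Etr n \<omega> j $ l) ^ 4 + 2 * d\<^sup>2" for j \<omega>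
  have Y_le: "(Y j \<omega>)\<^sup>2 \<le> B j \<omega>" for j \<omega>
    using square_diff_le[of "Etr n \<omega> j $ k * Etr n \<omega> j $ l" d]
      square_mult_square_le[of "Etr n \<omega> j $ k" "Etr n \<omega> j $ l"]
    by (simp add: Y_def B_def power_mult_distrib)
  have B_int: "integrable M (B j)" if "j < n" for j
    unfolding B_def using Etr_moments(1)[OF that] by simp
  have Y_sq: "integrable M (\<lambda>\<omega>. (Y j \<omega>)\<^sup>2)"
    and Y_sq_le: "expectation (\<lambda>\<omega>. (Y j \<omega>)\<^sup>2) \<le> expectation (B j)" if "j < n" for j
    using dominated_integrable_integral_le[OF _ B_int[OF that] _ Y_le] by (auto simp: Y_def)
  have B_le: "expectation (B j) \<le> 14 * \<sigma>z ^ 4" if "j < n" for j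
  proof -
    have "d\<^sup>2 \<le> \<sigma>z ^ 4" by (simp add: d_def power_mult[symmetric])
    then show ?thesis
      unfolding B_def using Etr_moments(1)[OF that] by (simp add: Etr_moments(4)[OF that] prob_space)
  qed
  have centred: "expectation (Y j) = 0" if "j < n" for j
  proof -
    have int: "integrable M (\<lambda>\<omega>. Etr n \<omega> j $ k * Etr n \<omega> j $ l)"
      by (rule integrable_mult_of_squares) (use Etr_moments(1)[OF that] in auto)
    have "expectation (\<lambda>\<omega>. Etr n \<omega> j $ k * Etr n \<omega> j $ l) = d"
      using Etr_moments(3)[OF that, of k] expectation_Etr_mult[OF that that, of k l]
      by (cases "k = l") (auto simp: d_def power2_eq_square)
    then show ?thesis using int by (simp add: Y_def[abs_def] prob_space)
  qed
  have Y_meas: "Y j \<in> borel_measurable M" for j unfolding Y_def[abs_def] by measurable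
  have "Y j \<omega> = (\<lambda>f. f (Inl (j, k)) * f (Inl (j, l)) - d) (noise_restr n \<omega> (row_block j))"
    if "j < n" for j \<omega>
    using that by (simp add: Y_def Etr_eq)
  note rows = expectation_sum_sq_row_functions[OF this _ Y_meas Y_sq centred]
  have sum_eq: "(\<lambda>\<omega>. (\<Sum>j<n. Etr n \<omega> j $ k * Etr n \<omega> j $ l - d)\<^sup>2) = (\<lambda>\<omega>. (\<Sum>j<n. Y j \<omega>)\<^sup>2)"
    by (simp add: Y_def)
  show "integrable M (\<lambda>\<omega>. (\<Sum>j<n. Etr n \<omega> j $ k * Etr n \<omega> j $ l - d)\<^sup>2)"
    unfolding sum_eq by (rule rows(1)) measurable
  have "expectation (\<lambda>\<omega>. (\<Sum>j<n. Y j \<omega>)\<^sup>2) = (\<Sum>j<n. expectation (\<lambda>\<omega>. (Y j \<omega>)\<^sup>2))"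
    by (rule rows(2)) measurable
  also have "\<dots> \<le> (\<Sum>j<n. 14 * \<sigma>z ^ 4)"
    by (rule sum_mono) (use Y_sq_le B_le in \<open>fastforce intro: order_trans\<close>)
  finally show "expectation (\<lambda>\<omega>. (\<Sum>j<n. Etr n \<omega> j $ k * Etr n \<omega> j $ l - d)\<^sup>2) \<le> 14 * real n * \<sigma>z ^ 4"
    unfolding sum_eq by simp
qed

lemma expectation_\<epsilon>tr_cross_sq_le:
  fixes a :: "nat \<Rightarrow> real" and b :: real and k :: 'p
  shows "integrable M (\<lambda>\<omega>. (\<Sum>j<n. \<epsilon>tr n \<omega> j * (a j + b * Etr n \<omega> j $ k))\<^sup>2)"
    and "expectation (\<lambda>\<omega>. (\<Sum>j<n. \<epsilon>tr n \<omega> j * (a j + b * Etr n \<omega> j $ k))\<^sup>2)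
         \<le> (\<Sum>j<n. 2 * (a j)\<^sup>2 * \<sigma>\<^sup>2 + 2 * b\<^sup>2 * (3 * \<sigma> ^ 4 + 3 * \<sigma>z ^ 4))"
proof -
  define Y where "Y j \<omega> = \<epsilon>tr n \<omega> j * (a j + b * Etr n \<omega> j $ k)" for j \<omega>
  define B where "B j \<omega> = 2 * (a j)\<^sup>2 * (\<epsilon>tr n \<omega> j)\<^sup>2 + 2 * b\<^sup>2 * ((\<epsilon>tr n \<omega> j) ^ 4 + (Etr n \<omega> j $ k) ^ 4)"
    for j \<omega>
  have Y_le: "(Y j \<omega>)\<^sup>2 \<le> B j \<omega>" for j \<omega>
  proof -
    have "(Y j \<omega>)\<^sup>2 = (\<epsilon>tr n \<omega> j)\<^sup>2 * (a j + b * Etr n \<omega> j $ k)\<^sup>2"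
      by (simp add: Y_def power_mult_distrib)
    also have "\<dots> \<le> (\<epsilon>tr n \<omega> j)\<^sup>2 * (2 * (a j)\<^sup>2 + 2 * (b * Etr n \<omega> j $ k)\<^sup>2)"
      by (rule mult_left_mono[OF square_add_le]) simp
    also have "\<dots> = 2 * (a j)\<^sup>2 * (\<epsilon>tr n \<omega> j)\<^sup>2 + 2 * b\<^sup>2 * ((\<epsilon>tr n \<omega> j)\<^sup>2 * (Etr n \<omega> j $ k)\<^sup>2)"
      by (simp add: power_mult_distrib algebra_simps)
    also have "\<dots> \<le> B j \<omega>"
      unfolding B_def using square_mult_square_le[of "\<epsilon>tr n \<omega> j" "Etr n \<omega> j $ k"]
      by (simp add: mult_left_mono)
    finally show ?thesis .
  qed
  have B_int: "integrable M (B j)" if "j < n" for j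
    unfolding B_def using Etr_moments(1)[OF that] \<epsilon>tr_moments(1)[OF that] by simp
  have Y_meas: "Y j \<in> borel_measurable M" for j unfolding Y_def[abs_def] by measurable
  have Y_sq: "integrable M (\<lambda>\<omega>. (Y j \<omega>)\<^sup>2)"
    and Y_sq_le: "expectation (\<lambda>\<omega>. (Y j \<omega>)\<^sup>2) \<le> expectation (B j)" if "j < n" for j
    using dominated_integrable_integral_le[OF _ B_int[OF that] _ Y_le] Y_meas by auto
  have B_eq: "expectation (B j) = 2 * (a j)\<^sup>2 * \<sigma>\<^sup>2 + 2 * b\<^sup>2 * (3 * \<sigma> ^ 4 + 3 * \<sigma>z ^ 4)"
    if "j < n" for j
    unfolding B_def using Etr_moments(1)[OF that] \<epsilon>tr_moments(1)[OF that]
    by (simp add: Etr_moments(4)[OF that] \<epsilon>tr_moments(3,4)[OF that])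
  have centred: "expectation (Y j) = 0" if "j < n" for j
  proof -
    have int: "integrable M (\<lambda>\<omega>. \<epsilon>tr n \<omega> j * Etr n \<omega> j $ k)"
      by (rule integrable_mult_of_squares) (use Etr_moments(1)[OF that] \<epsilon>tr_moments(1)[OF that] in auto)
    have "Y j = (\<lambda>\<omega>. a j * \<epsilon>tr n \<omega> j + b * (\<epsilon>tr n \<omega> j * Etr n \<omega> j $ k))"
      by (auto simp: Y_def algebra_simps)
    then show ?thesis
      using int \<epsilon>tr_moments(1)[OF that, of 1] \<epsilon>tr_moments(2)[OF that]
        expectation_\<epsilon>tr_Etr_mult[OF that that, of k]
      by simp
  qed
  have "Y j \<omega> = (\<lambda>f. f (Inr j) * (a j + b * f (Inl (j, k)))) (noise_restr n \<omega> (row_block j))"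
    if "j < n" for j \<omega>
    using that by (simp add: Y_def Etr_eq \<epsilon>tr_eq)
  note rows = expectation_sum_sq_row_functions[OF this _ Y_meas Y_sq centred]
  show "integrable M (\<lambda>\<omega>. (\<Sum>j<n. \<epsilon>tr n \<omega> j * (a j + b * Etr n \<omega> j $ k))\<^sup>2)"
    using rows(1) unfolding Y_def by measurable
  have "expectation (\<lambda>\<omega>. (\<Sum>j<n. Y j \<omega>)\<^sup>2) = (\<Sum>j<n. expectation (\<lambda>\<omega>. (Y j \<omega>)\<^sup>2))"
    by (rule rows(2)) measurable
  also have "\<dots> \<le> (\<Sum>j<n. 2 * (a j)\<^sup>2 * \<sigma>\<^sup>2 + 2 * b\<^sup>2 * (3 * \<sigma> ^ 4 + 3 * \<sigma>z ^ 4))"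
    by (rule sum_mono) (use Y_sq_le B_eq in fastforce)
  finally show "expectation (\<lambda>\<omega>. (\<Sum>j<n. \<epsilon>tr n \<omega> j * (a j + b * Etr n \<omega> j $ k))\<^sup>2)
      \<le> (\<Sum>j<n. 2 * (a j)\<^sup>2 * \<sigma>\<^sup>2 + 2 * b\<^sup>2 * (3 * \<sigma> ^ 4 + 3 * \<sigma>z ^ 4))"
    by (simp add: Y_def)
qed

lemma expectation_Etr_energy:
  shows "integrable M (\<lambda>\<omega>. \<Sum>j<n. \<Sum>k\<in>UNIV. (Etr n \<omega> j $ k)\<^sup>2)"
    and "expectation (\<lambda>\<omega>. \<Sum>j<n. \<Sum>k\<in>UNIV. (Etr n \<omega> j $ k)\<^sup>2) = real n * real CARD('p) * \<sigma>z\<^sup>2"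
proof -
  have int: "integrable M (\<lambda>\<omega>. (Etr n \<omega> j $ k)\<^sup>2)" if "j \<in> {..<n}" for j k
    using Etr_moments(1)[of j n k 2] that by simp
  then show "integrable M (\<lambda>\<omega>. \<Sum>j<n. \<Sum>k\<in>UNIV. (Etr n \<omega> j $ k)\<^sup>2)" by auto
  have "expectation (\<lambda>\<omega>. \<Sum>j<n. \<Sum>k\<in>UNIV. (Etr n \<omega> j $ k)\<^sup>2)
      = (\<Sum>j<n. \<Sum>k\<in>UNIV. expectation (\<lambda>\<omega>. (Etr n \<omega> j $ k)\<^sup>2))"
    using int by (simp add: Bochner_Integration.integrable_sum)
  also have "\<dots> = (\<Sum>j<n. \<Sum>k\<in>(UNIV::'p set). \<sigma>z\<^sup>2)"
    by (intro sum.cong refl) (simp add: Etr_moments(3))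
  finally show "expectation (\<lambda>\<omega>. \<Sum>j<n. \<Sum>k\<in>UNIV. (Etr n \<omega> j $ k)\<^sup>2) = real n * real CARD('p) * \<sigma>z\<^sup>2"
    by simp
qed

lemma expectation_weighted_\<epsilon>tr_sq_le:
  fixes w :: "nat \<Rightarrow> real"
  assumes w: "\<And>j. 0 \<le> w j"
  shows "integrable M (\<lambda>\<omega>. \<Sum>j<n. (w j + 2 * (\<Sum>k\<in>UNIV. (Etr n \<omega> j $ k)\<^sup>2)) * (\<epsilon>tr n \<omega> j)\<^sup>2)"
    and "expectation (\<lambda>\<omega>. \<Sum>j<n. (w j + 2 * (\<Sum>k\<in>UNIV. (Etr n \<omega> j $ k)\<^sup>2)) * (\<epsilon>tr n \<omega> j)\<^sup>2)
       \<le> (\<Sum>j<n. w j * \<sigma>\<^sup>2 + real CARD('p) * (6 * \<sigma>z ^ 4 + 6 * \<sigma> ^ 4))"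
proof -
  define F where "F \<omega> = (\<Sum>j<n. (w j + 2 * (\<Sum>k\<in>UNIV. (Etr n \<omega> j $ k)\<^sup>2)) * (\<epsilon>tr n \<omega> j)\<^sup>2)" for \<omega>
  define G where "G \<omega> = (\<Sum>j<n. w j * (\<epsilon>tr n \<omega> j)\<^sup>2
      + (\<Sum>k\<in>(UNIV::'p set). 2 * ((Etr n \<omega> j $ k) ^ 4 + (\<epsilon>tr n \<omega> j) ^ 4)))" for \<omega>
  have F_le: "F \<omega> \<le> G \<omega>" for \<omega>
    unfolding F_def G_def
  proof (rule sum_mono)
    fix j
    have "(w j + 2 * (\<Sum>k\<in>UNIV. (Etr n \<omega> j $ k)\<^sup>2)) * (\<epsilon>tr n \<omega> j)\<^sup>2
        = w j * (\<epsilon>tr n \<omega> j)\<^sup>2 + (\<Sum>k\<in>(UNIV::'p set). 2 * ((Etr n \<omega> j $ k)\<^sup>2 * (\<epsilon>tr n \<omega> j)\<^sup>2))"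
      by (simp add: algebra_simps sum_distrib_left sum_distrib_right)
    also have "\<dots> \<le> w j * (\<epsilon>tr n \<omega> j)\<^sup>2 + (\<Sum>k\<in>(UNIV::'p set). 2 * ((Etr n \<omega> j $ k) ^ 4 + (\<epsilon>tr n \<omega> j) ^ 4))"
      using square_mult_square_le by (intro add_left_mono sum_mono mult_left_mono) auto
    finally show "(w j + 2 * (\<Sum>k\<in>UNIV. (Etr n \<omega> j $ k)\<^sup>2)) * (\<epsilon>tr n \<omega> j)\<^sup>2
        \<le> w j * (\<epsilon>tr n \<omega> j)\<^sup>2 + (\<Sum>k\<in>(UNIV::'p set). 2 * ((Etr n \<omega> j $ k) ^ 4 + (\<epsilon>tr n \<omega> j) ^ 4))" .
  qed
  have G_int: "integrable M G"
    unfolding G_def using Etr_moments(1) \<epsilon>tr_moments(1) by (intro Bochner_Integration.integrable_sum) auto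
  have F_meas: "F \<in> borel_measurable M" unfolding F_def by measurable
  have F_nonneg: "0 \<le> F \<omega>" for \<omega>
    unfolding F_def using w by (intro sum_nonneg mult_nonneg_nonneg add_nonneg_nonneg) auto
  note dominated = dominated_integrable_integral_le[OF F_meas G_int F_nonneg F_le]
  show "integrable M (\<lambda>\<omega>. \<Sum>j<n. (w j + 2 * (\<Sum>k\<in>UNIV. (Etr n \<omega> j $ k)\<^sup>2)) * (\<epsilon>tr n \<omega> j)\<^sup>2)"
    using dominated(1) unfolding F_def .
  have "expectation G = (\<Sum>j<n. w j * \<sigma>\<^sup>2 + real CARD('p) * (6 * \<sigma>z ^ 4 + 6 * \<sigma> ^ 4))"
    unfolding G_def using Etr_moments(1) \<epsilon>tr_moments(1)
    by (simp add: Bochner_Integration.integrable_sum Etr_moments(4) \<epsilon>tr_moments(3,4))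
  then show "expectation (\<lambda>\<omega>. \<Sum>j<n. (w j + 2 * (\<Sum>k\<in>UNIV. (Etr n \<omega> j $ k)\<^sup>2)) * (\<epsilon>tr n \<omega> j)\<^sup>2)
       \<le> (\<Sum>j<n. w j * \<sigma>\<^sup>2 + real CARD('p) * (6 * \<sigma>z ^ 4 + 6 * \<sigma> ^ 4))"
    using dominated(2) unfolding F_def by simp
qed

lemma expectation_Etr_energy_sq_le:
  shows "integrable M (\<lambda>\<omega>. \<Sum>j<n. (\<Sum>k\<in>UNIV. (Etr n \<omega> j $ k)\<^sup>2)\<^sup>2)"
    and "expectation (\<lambda>\<omega>. \<Sum>j<n. (\<Sum>k\<in>UNIV. (Etr n \<omega> j $ k)\<^sup>2)\<^sup>2)
       \<le> real n * real CARD('p) * real CARD('p) * (3 * \<sigma>z ^ 4)"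
proof -
  define F where "F \<omega> = (\<Sum>j<n. (\<Sum>k\<in>UNIV. (Etr n \<omega> j $ k)\<^sup>2)\<^sup>2)" for \<omega>
  define G where "G \<omega> = (\<Sum>j<n. real CARD('p) * (\<Sum>k\<in>(UNIV::'p set). (Etr n \<omega> j $ k) ^ 4))" for \<omega>
  have F_le: "F \<omega> \<le> G \<omega>" for \<omega>
    unfolding F_def G_def
  proof (rule sum_mono)
    fix j
    have "(\<Sum>k\<in>UNIV. 1 * (Etr n \<omega> j $ k)\<^sup>2)\<^sup>2 \<le> (\<Sum>k\<in>(UNIV::'p set). 1\<^sup>2) * (\<Sum>k\<in>UNIV. ((Etr n \<omega> j $ k)\<^sup>2)\<^sup>2)"
      by (rule Cauchy_Schwarz_ineq_sum)
    then show "(\<Sum>k\<in>UNIV. (Etr n \<omega> j $ k)\<^sup>2)\<^sup>2 \<le> real CARD('p) * (\<Sum>k\<in>(UNIV::'p set). (Etr n \<omega> j $ k) ^ 4)"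
      by (simp add: power_mult[symmetric])
  qed
  have G_int: "integrable M G"
    unfolding G_def using Etr_moments(1) by (intro Bochner_Integration.integrable_sum) auto
  have F_meas: "F \<in> borel_measurable M" unfolding F_def by measurable
  have F_nonneg: "0 \<le> F \<omega>" for \<omega> unfolding F_def by (intro sum_nonneg) auto
  note dominated = dominated_integrable_integral_le[OF F_meas G_int F_nonneg F_le]
  show "integrable M (\<lambda>\<omega>. \<Sum>j<n. (\<Sum>k\<in>UNIV. (Etr n \<omega> j $ k)\<^sup>2)\<^sup>2)"
    using dominated(1) unfolding F_def .
  have "expectation G = real n * real CARD('p) * real CARD('p) * (3 * \<sigma>z ^ 4)"
    unfolding G_def using Etr_moments(1) by (simp add: Bochner_Integration.integrable_sum Etr_moments(4))
  then show "expectation (\<lambda>\<omega>. \<Sum>j<n. (\<Sum>k\<in>UNIV. (Etr n \<omega> j $ k)\<^sup>2)\<^sup>2)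
       \<le> real n * real CARD('p) * real CARD('p) * (3 * \<sigma>z ^ 4)"
    using dominated(2) unfolding F_def by simp
qed

end

section \<open>Pre-validated ridge fits on noisy regressors\<close>

text \<open>Row \<open>j\<close> of \<open>Z\<close> is \<open>m n j + E n \<omega> j\<close> and the response is \<open>s n j + \<epsilon> n \<omega> j\<close>; in the
  theorem \<open>m n j = x\<^sub>j \<Gamma>\<close> and \<open>s n j = x\<^sub>j \<bullet> \<beta>\<^sub>0\<close>.\<close>
locale ridge_design = gaussian_noise M E \<epsilon> \<sigma> \<sigma>z
  for M :: "'w measure" and E :: "nat \<Rightarrow> 'w \<Rightarrow> nat \<Rightarrow> real^'p" and \<epsilon> \<sigma> \<sigma>z +
  fixes m :: "nat \<Rightarrow> nat \<Rightarrow> real^'p" and s :: "nat \<Rightarrow> nat \<Rightarrow> real" and lam :: "nat \<Rightarrow> real"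
    and Cm Mb B :: real
  assumes lam_nonneg: "\<And>n. lam n \<ge> 0"
    and mean_energy: "eventually (\<lambda>n. (\<Sum>j<n. (norm (m n j))\<^sup>2) \<le> Cm * real n) sequentially"
    and mean_average: "eventually (\<lambda>n. norm ((1 / real n) *\<^sub>R (\<Sum>j<n. m n j)) \<le> Mb) sequentially"
    and signal_energy: "eventually (\<lambda>n. (\<Sum>j<n. (s n j)\<^sup>2) \<le> B) sequentially"
    and mean_rows_small: "\<And>r. r > 0 \<Longrightarrow> eventually (\<lambda>n. \<forall>j<n. (norm (m n j))\<^sup>2 \<le> r * real n) sequentially"
begin

lemma design_constants_nonneg: "0 \<le> Cm" "0 \<le> Mb" "0 \<le> B"
proof -
  have "eventually (\<lambda>n. n > 0 \<and> (\<Sum>j<n. (norm (m n j))\<^sup>2) \<le> Cm * real n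
      \<and> norm ((1 / real n) *\<^sub>R (\<Sum>j<n. m n j)) \<le> Mb \<and> (\<Sum>j<n. (s n j)\<^sup>2) \<le> B) sequentially"
    using eventually_gt_at_top[of 0] mean_energy mean_average signal_energy by eventually_elim auto
  then obtain n where n: "n > 0" "(\<Sum>j<n. (norm (m n j))\<^sup>2) \<le> Cm * real n"
      "norm ((1 / real n) *\<^sub>R (\<Sum>j<n. m n j)) \<le> Mb" "(\<Sum>j<n. (s n j)\<^sup>2) \<le> B"
    unfolding eventually_sequentially by blast
  have "0 \<le> Cm * real n" using n(2) by (meson order_trans sum_nonneg zero_le_power2)
  then show "0 \<le> Cm" using n(1) by (simp add: zero_le_mult_iff)
  show "0 \<le> Mb" using n(3) norm_ge_zero order_trans by blast
  show "0 \<le> B" using n(4) sum_nonneg[of "{..<n}" "\<lambda>j. (s n j)\<^sup>2"] by simp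
qed

definition "zrow n \<omega> j = aug (m n j + Etr n \<omega> j)"

definition "fit n \<omega> i = zrow n \<omega> i \<bullet> ridge_coef (lam n) (zrow n \<omega>) (\<lambda>j. s n j + \<epsilon>tr n \<omega> j) {..<n}"

definition "loo_fit n \<omega> i =
  zrow n \<omega> i \<bullet> ridge_coef (lam n) (zrow n \<omega>) (\<lambda>j. s n j + \<epsilon>tr n \<omega> j) ({..<n} - {i})"

text \<open>\<open>gram_dev\<close> collects the squared entries of the centred parts of the Gram matrix of the rows
  \<open>[1, m\<^sub>j + E\<^sub>j]\<close>; \<open>resp_noise_energy\<close> dominates \<open>\<parallel>\<Sum>\<^sub>j \<epsilon>\<^sub>j z\<^sub>j\<parallel>\<^sup>2\<close>, \<open>\<Sum>\<^sub>j \<parallel>E\<^sub>j\<parallel>\<^sup>2\<close> and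
  \<open>\<Sum>\<^sub>j \<parallel>z\<^sub>j\<parallel>\<^sup>2 \<epsilon>\<^sub>j\<^sup>2\<close> (see \<open>zrow_energy_bounds\<close>).\<close>
definition "gram_dev n \<omega> = (\<Sum>l\<in>UNIV. (\<Sum>j<n. Etr n \<omega> j $ l)\<^sup>2)
   + (\<Sum>k\<in>UNIV. \<Sum>l\<in>UNIV. (\<Sum>j<n. m n j $ k * Etr n \<omega> j $ l)\<^sup>2)
   + (\<Sum>k\<in>UNIV. \<Sum>l\<in>UNIV. (\<Sum>j<n. Etr n \<omega> j $ k * Etr n \<omega> j $ l - (if k = l then \<sigma>z\<^sup>2 else 0))\<^sup>2)"

definition "noise_energy_sq n \<omega> = (\<Sum>j<n. (\<Sum>k\<in>UNIV. (Etr n \<omega> j $ k)\<^sup>2)\<^sup>2)"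

definition "resp_noise_energy n \<omega> = (\<Sum>j<n. \<epsilon>tr n \<omega> j)\<^sup>2
   + (\<Sum>k\<in>UNIV. (\<Sum>j<n. \<epsilon>tr n \<omega> j * (m n j $ k + Etr n \<omega> j $ k))\<^sup>2)
   + (\<Sum>j<n. \<Sum>k\<in>UNIV. (Etr n \<omega> j $ k)\<^sup>2)
   + (\<Sum>j<n. (1 + 2 * (norm (m n j))\<^sup>2 + 2 * (\<Sum>k\<in>UNIV. (Etr n \<omega> j $ k)\<^sup>2)) * (\<epsilon>tr n \<omega> j)\<^sup>2)"

definition "c0 = min (\<sigma>z\<^sup>2 / (4 * (Mb\<^sup>2 + \<sigma>z\<^sup>2))) (\<sigma>z\<^sup>2 / 2)"

definition "gram_tol = c0 / (2 * (2 * real CARD('p) + 3 * real CARD('p) * real CARD('p)))"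

lemma c0_pos: "c0 > 0"
  unfolding c0_def using sigz by (simp add: add_nonneg_pos)

lemma gram_tol_pos: "gram_tol > 0"
  unfolding gram_tol_def using c0_pos by (simp add: add_pos_nonneg)

definition "gram_err n \<omega> = 2 * (\<Sum>l\<in>UNIV. \<bar>\<Sum>j<n. Etr n \<omega> j $ l\<bar>)
   + 2 * (\<Sum>k\<in>UNIV. \<Sum>l\<in>UNIV. \<bar>\<Sum>j<n. m n j $ k * Etr n \<omega> j $ l\<bar>)
   + (\<Sum>k\<in>UNIV. \<Sum>l\<in>UNIV. \<bar>\<Sum>j<n. Etr n \<omega> j $ k * Etr n \<omega> j $ l - (if k = l then \<sigma>z\<^sup>2 else 0)\<bar>)"

lemma gram_err_le:
  assumes dev: "gram_dev n \<omega> < (gram_tol * real n)\<^sup>2"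
  shows "gram_err n \<omega> \<le> c0 / 2 * real n"
proof -
  define p where "p = real CARD('p)"
  define U where "U l = (\<Sum>j<n. Etr n \<omega> j $ l)" for l
  define V where "V k l = (\<Sum>j<n. m n j $ k * Etr n \<omega> j $ l)" for k l
  define S where "S k l = (\<Sum>j<n. Etr n \<omega> j $ k * Etr n \<omega> j $ l - (if k = l then \<sigma>z\<^sup>2 else 0))" for k l
  have dev_eq: "gram_dev n \<omega> = (\<Sum>l\<in>UNIV. (U l)\<^sup>2) + (\<Sum>k\<in>UNIV. \<Sum>l\<in>UNIV. (V k l)\<^sup>2)
      + (\<Sum>k\<in>UNIV. \<Sum>l\<in>UNIV. (S k l)\<^sup>2)"
    by (simp add: gram_dev_def U_def V_def S_def)
  have entry_le: "\<bar>x\<bar> \<le> gram_tol * real n" if "x\<^sup>2 \<le> gram_dev n \<omega>" for x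
    using power2_le_imp_le[of "\<bar>x\<bar>"] that dev gram_tol_pos by simp
  have single_le: "(f l)\<^sup>2 \<le> (\<Sum>l\<in>UNIV. (f l)\<^sup>2)" for f :: "'p \<Rightarrow> real" and l
    by (rule member_le_sum) auto
  have double_le: "(f k l)\<^sup>2 \<le> (\<Sum>k\<in>UNIV. \<Sum>l\<in>UNIV. (f k l)\<^sup>2)" for f :: "'p \<Rightarrow> 'p \<Rightarrow> real" and k l
    by (rule order_trans[OF single_le[of "f k"]], rule member_le_sum) (auto intro: sum_nonneg)
  have nonneg: "0 \<le> (\<Sum>l\<in>UNIV. (U l)\<^sup>2)" "0 \<le> (\<Sum>k\<in>UNIV. \<Sum>l\<in>UNIV. (V k l)\<^sup>2)"
      "0 \<le> (\<Sum>k\<in>UNIV. \<Sum>l\<in>UNIV. (S k l)\<^sup>2)" by (simp_all add: sum_nonneg)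
  have "\<bar>U l\<bar> \<le> gram_tol * real n" for l
    using single_le[of U l] nonneg by (intro entry_le, unfold dev_eq) linarith
  moreover have "\<bar>V k l\<bar> \<le> gram_tol * real n" for k l
    using double_le[of V k l] nonneg by (intro entry_le, unfold dev_eq) linarith
  moreover have "\<bar>S k l\<bar> \<le> gram_tol * real n" for k l
    using double_le[of S k l] nonneg by (intro entry_le, unfold dev_eq) linarith
  ultimately have "(\<Sum>l\<in>UNIV. \<bar>U l\<bar>) \<le> p * (gram_tol * real n)"
      "(\<Sum>k\<in>UNIV. \<Sum>l\<in>UNIV. \<bar>V k l\<bar>) \<le> p * (p * (gram_tol * real n))"
      "(\<Sum>k\<in>UNIV. \<Sum>l\<in>UNIV. \<bar>S k l\<bar>) \<le> p * (p * (gram_tol * real n))"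
    unfolding p_def by (auto intro!: order_trans[OF sum_bounded_above] sum_bounded_above)
  then have "gram_err n \<omega> \<le> (2 * p + 3 * p * p) * gram_tol * real n"
    unfolding gram_err_def U_def[symmetric] V_def[symmetric] S_def[symmetric] by (simp add: algebra_simps)
  also have "(2 * p + 3 * p * p) * gram_tol = c0 / 2"
  proof -
    have "2 * p + 3 * p * p > 0" unfolding p_def by (simp add: add_pos_nonneg)
    then show ?thesis unfolding gram_tol_def p_def[symmetric] by (simp add: field_simps)
  qed
  finally show ?thesis .
qed

lemma gram_lower_bound:
  assumes n: "n > 0" and mean: "norm ((1 / real n) *\<^sub>R (\<Sum>j<n. m n j)) \<le> Mb"
    and dev: "gram_dev n \<omega> < (gram_tol * real n)\<^sup>2"
  shows "c0 / 2 * real n * (norm v)\<^sup>2 \<le> (\<Sum>j<n. (v \<bullet> zrow n \<omega> j)\<^sup>2)"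
proof -
  define w where "w = vec_tail v"
  define ub where "ub = (1 / real n) *\<^sub>R (\<Sum>j<n. m n j)"
  have "\<bar>w \<bullet> ub\<bar> \<le> Mb * norm w"
    using Cauchy_Schwarz_ineq2[of w ub] mult_left_mono[OF mean[folded ub_def] norm_ge_zero, of w]
    by (simp add: mult.commute)
  then have "c0 * ((v $ None)\<^sup>2 + (norm w)\<^sup>2) \<le> (v $ None + w \<bullet> ub)\<^sup>2 + \<sigma>z\<^sup>2 * (norm w)\<^sup>2"
    unfolding c0_def using sigz design_constants_nonneg(2) by (intro shifted_quadratic_lower_bound) auto
  then have "real n * (c0 * (norm v)\<^sup>2) \<le> real n * ((v $ None + w \<bullet> ub)\<^sup>2 + \<sigma>z\<^sup>2 * (norm w)\<^sup>2)"
    unfolding norm_sq_option_vec[of v, folded w_def] by (rule mult_left_mono) simp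
  moreover have "(norm v)\<^sup>2 * gram_err n \<omega> \<le> (norm v)\<^sup>2 * (c0 / 2 * real n)"
    by (rule mult_left_mono[OF gram_err_le[OF dev]]) simp
  moreover have "real n * ((v $ None + w \<bullet> ub)\<^sup>2 + \<sigma>z\<^sup>2 * (norm w)\<^sup>2) - (norm v)\<^sup>2 * gram_err n \<omega>
      \<le> (\<Sum>j<n. (v \<bullet> zrow n \<omega> j)\<^sup>2)"
    using augmented_gram_lower_bound[OF n, where v=v and u="m n" and e="Etr n \<omega>" and s="\<sigma>z\<^sup>2"]
    by (simp add: w_def ub_def gram_err_def zrow_def)
  moreover have "c0 / 2 * real n * (norm v)\<^sup>2 = real n * (c0 * (norm v)\<^sup>2) - (norm v)\<^sup>2 * (c0 / 2 * real n)"
    by (simp add: algebra_simps)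
  ultimately show ?thesis by linarith
qed

definition "fit_bound K = (2 * B * (1 + 2 * Cm + 2 * K) + 2 * K) / (c0 / 2)"

definition "loo_bound K = 2 * fit_bound K + 4 * B + 8 * K / (c0 / 2)"

lemma zrow_norm_sq_le:
  "(norm (zrow n \<omega> j))\<^sup>2 \<le> 1 + 2 * (norm (m n j))\<^sup>2 + 2 * (\<Sum>k\<in>UNIV. (Etr n \<omega> j $ k)\<^sup>2)"
  using norm_add_sq_le[of "m n j" "Etr n \<omega> j"]
  by (simp add: zrow_def norm_sq_aug norm_sq_eq_sum_components[of "Etr n \<omega> j"])

lemma zrow_max_le:
  assumes n_large: "1 \<le> \<rho> / 4 * real n" and \<rho>: "0 < \<rho>"
    and rows: "\<forall>j<n. (norm (m n j))\<^sup>2 \<le> \<rho> / 8 * real n"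
    and quartic: "noise_energy_sq n \<omega> < (\<rho> / 8 * real n)\<^sup>2"
    and j: "j < n"
  shows "(norm (zrow n \<omega> j))\<^sup>2 \<le> \<rho> * real n"
proof -
  have "(\<Sum>k\<in>UNIV. (Etr n \<omega> j $ k)\<^sup>2)\<^sup>2 \<le> noise_energy_sq n \<omega>"
    unfolding noise_energy_sq_def using j by (intro member_le_sum) auto
  then have "(\<Sum>k\<in>UNIV. (Etr n \<omega> j $ k)\<^sup>2) \<le> \<rho> / 8 * real n"
    using power2_le_imp_le[of "\<Sum>k\<in>UNIV. (Etr n \<omega> j $ k)\<^sup>2" "\<rho> / 8 * real n"] quartic \<rho> by simp
  then show ?thesis using zrow_norm_sq_le[of n \<omega> j] rows j n_large by auto
qed

lemma zrow_energy_bounds: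
  assumes energy: "(\<Sum>j<n. (norm (m n j))\<^sup>2) \<le> Cm * real n"
    and resp: "resp_noise_energy n \<omega> < K * real n"
  shows "(\<Sum>j<n. (norm (zrow n \<omega> j))\<^sup>2) \<le> (1 + 2 * Cm + 2 * K) * real n"
    and "(norm (\<Sum>j<n. \<epsilon>tr n \<omega> j *\<^sub>R zrow n \<omega> j))\<^sup>2 \<le> K * real n"
    and "(\<Sum>j<n. (norm (zrow n \<omega> j))\<^sup>2 * (\<epsilon>tr n \<omega> j)\<^sup>2) \<le> K * real n"
proof -
  define A1 where "A1 = (\<Sum>j<n. \<epsilon>tr n \<omega> j)\<^sup>2"
  define A2 where "A2 = (\<Sum>k\<in>UNIV. (\<Sum>j<n. \<epsilon>tr n \<omega> j * (m n j $ k + Etr n \<omega> j $ k))\<^sup>2)"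
  define A3 where "A3 = (\<Sum>j<n. \<Sum>k\<in>UNIV. (Etr n \<omega> j $ k)\<^sup>2)"
  define A4 where "A4 = (\<Sum>j<n. (1 + 2 * (norm (m n j))\<^sup>2 + 2 * (\<Sum>k\<in>UNIV. (Etr n \<omega> j $ k)\<^sup>2))
      * (\<epsilon>tr n \<omega> j)\<^sup>2)"
  have resp_eq: "resp_noise_energy n \<omega> = A1 + A2 + A3 + A4"
    by (simp add: resp_noise_energy_def A1_def A2_def A3_def A4_def)
  have A_nonneg: "0 \<le> A1" "0 \<le> A2" "0 \<le> A3" "0 \<le> A4"
    unfolding A1_def A2_def A3_def A4_def
    by (auto intro!: sum_nonneg mult_nonneg_nonneg add_nonneg_nonneg)
  have "(\<Sum>j<n. (norm (zrow n \<omega> j))\<^sup>2)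
      \<le> (\<Sum>j<n. 1 + 2 * (norm (m n j))\<^sup>2 + 2 * (\<Sum>k\<in>UNIV. (Etr n \<omega> j $ k)\<^sup>2))"
    by (rule sum_mono) (rule zrow_norm_sq_le)
  also have "\<dots> = real n + 2 * (\<Sum>j<n. (norm (m n j))\<^sup>2) + 2 * A3"
    by (simp add: A3_def sum.distrib sum_distrib_left)
  finally show "(\<Sum>j<n. (norm (zrow n \<omega> j))\<^sup>2) \<le> (1 + 2 * Cm + 2 * K) * real n"
    using energy resp A_nonneg unfolding resp_eq by (simp add: algebra_simps)
  have "(norm (\<Sum>j<n. \<epsilon>tr n \<omega> j *\<^sub>R zrow n \<omega> j))\<^sup>2 = A1 + A2"
    by (simp add: norm_sq_eq_sum_components sum_UNIV_option A1_def A2_def zrow_def aug_def)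
  then show "(norm (\<Sum>j<n. \<epsilon>tr n \<omega> j *\<^sub>R zrow n \<omega> j))\<^sup>2 \<le> K * real n"
    using resp A_nonneg unfolding resp_eq by simp
  have "(\<Sum>j<n. (norm (zrow n \<omega> j))\<^sup>2 * (\<epsilon>tr n \<omega> j)\<^sup>2) \<le> A4"
    unfolding A4_def by (intro sum_mono mult_right_mono zrow_norm_sq_le) auto
  then show "(\<Sum>j<n. (norm (zrow n \<omega> j))\<^sup>2 * (\<epsilon>tr n \<omega> j)\<^sup>2) \<le> K * real n"
    using resp A_nonneg unfolding resp_eq by simp
qed

lemma fit_bounds:
  assumes n: "n > 0" and n_large: "1 \<le> \<rho> / 4 * real n" and \<rho>: "0 < \<rho>" "\<rho> \<le> c0 / 4"
    and mean: "norm ((1 / real n) *\<^sub>R (\<Sum>j<n. m n j)) \<le> Mb"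
    and energy: "(\<Sum>j<n. (norm (m n j))\<^sup>2) \<le> Cm * real n"
    and signal: "(\<Sum>j<n. (s n j)\<^sup>2) \<le> B"
    and rows: "\<forall>j<n. (norm (m n j))\<^sup>2 \<le> \<rho> / 8 * real n"
    and dev: "gram_dev n \<omega> < (gram_tol * real n)\<^sup>2"
    and quartic: "noise_energy_sq n \<omega> < (\<rho> / 8 * real n)\<^sup>2"
    and resp: "resp_noise_energy n \<omega> < K * real n"
  shows "(\<Sum>i<n. (fit n \<omega> i)\<^sup>2) \<le> fit_bound K"
    and "(\<Sum>i<n. (loo_fit n \<omega> i - fit n \<omega> i)\<^sup>2) \<le> 2 * \<rho> / (c0 / 2) * loo_bound K"
proof -
  have c: "0 < c0 / 2" using c0_pos by simp
  have gram: "c0 / 2 * real n * (norm v)\<^sup>2 \<le> (\<Sum>j<n. (v \<bullet> zrow n \<omega> j)\<^sup>2)" for v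
    by (rule gram_lower_bound[OF n mean dev])
  note zrow_energy = zrow_energy_bounds[OF energy resp]
  have fit: "(\<Sum>i<n. (fit n \<omega> i)\<^sup>2) \<le> fit_bound K"
    using ridge_fit_energy_le[OF lam_nonneg c n gram signal zrow_energy(1,2)]
    by (simp add: fit_def fit_bound_def)
  then show "(\<Sum>i<n. (fit n \<omega> i)\<^sup>2) \<le> fit_bound K" .
  show "(\<Sum>i<n. (loo_fit n \<omega> i - fit n \<omega> i)\<^sup>2) \<le> 2 * \<rho> / (c0 / 2) * loo_bound K"
    using ridge_loo_fit_diff_energy_le[OF lam_nonneg c n gram zrow_max_le[OF n_large \<rho>(1) rows quartic]
        _ _ fit[unfolded fit_def] signal zrow_energy(3)] \<rho>
    by (simp add: fit_def loo_fit_def loo_bound_def)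
qed

lemma measurable_gram_dev [measurable]: "gram_dev n \<in> borel_measurable M"
  unfolding gram_dev_def by measurable

lemma measurable_noise_energy_sq [measurable]: "noise_energy_sq n \<in> borel_measurable M"
  unfolding noise_energy_sq_def by measurable

lemma measurable_resp_noise_energy [measurable]: "resp_noise_energy n \<in> borel_measurable M"
  unfolding resp_noise_energy_def by measurable

lemma gram_dev_nonneg: "0 \<le> gram_dev n \<omega>"
  unfolding gram_dev_def by (intro add_nonneg_nonneg sum_nonneg) auto

lemma noise_energy_sq_nonneg: "0 \<le> noise_energy_sq n \<omega>"
  unfolding noise_energy_sq_def by (intro sum_nonneg) auto

lemma resp_noise_energy_nonneg: "0 \<le> resp_noise_energy n \<omega>"
  unfolding resp_noise_energy_def by (intro add_nonneg_nonneg sum_nonneg mult_nonneg_nonneg) auto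

definition "gram_rate = real CARD('p) * \<sigma>z\<^sup>2 * (1 + Cm) + 14 * real CARD('p) * real CARD('p) * \<sigma>z ^ 4"

definition "resp_rate =
  3 * \<sigma>\<^sup>2 + real CARD('p) * \<sigma>z\<^sup>2 + 12 * real CARD('p) * (\<sigma> ^ 4 + \<sigma>z ^ 4) + 4 * \<sigma>\<^sup>2 * Cm"

lemma gram_dev_expectation:
  assumes energy: "(\<Sum>j<n. (norm (m n j))\<^sup>2) \<le> Cm * real n"
  shows "integrable M (gram_dev n)" and "expectation (gram_dev n) \<le> real n * gram_rate"
proof -
  define U where "U l \<omega> = (\<Sum>j<n. Etr n \<omega> j $ l)\<^sup>2" for l \<omega>
  define V where "V k l \<omega> = (\<Sum>j<n. m n j $ k * Etr n \<omega> j $ l)\<^sup>2" for k l \<omega>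
  define S where "S k l \<omega> = (\<Sum>j<n. Etr n \<omega> j $ k * Etr n \<omega> j $ l - (if k = l then \<sigma>z\<^sup>2 else 0))\<^sup>2"
    for k l \<omega>
  have Ui: "integrable M (U l)" and Ue: "expectation (U l) = real n * \<sigma>z\<^sup>2" for l
    using expectation_linear_Etr_sq[where c="\<lambda>_. 1" and n=n and l=l] unfolding U_def by auto
  have Vi: "integrable M (V k l)" and Ve: "expectation (V k l) = \<sigma>z\<^sup>2 * (\<Sum>j<n. (m n j $ k)\<^sup>2)" for k l
    using expectation_linear_Etr_sq[where c="\<lambda>j. m n j $ k" and n=n and l=l] unfolding V_def by auto
  have Si: "integrable M (S k l)" and Se: "expectation (S k l) \<le> 14 * real n * \<sigma>z ^ 4" for k l
    using expectation_Etr_cov_dev_sq_le[where k=k and l=l and n=n] unfolding S_def by auto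
  have Qeq: "gram_dev n = (\<lambda>\<omega>. (\<Sum>l\<in>UNIV. U l \<omega>) + (\<Sum>k\<in>UNIV. \<Sum>l\<in>UNIV. V k l \<omega>)
      + (\<Sum>k\<in>UNIV. \<Sum>l\<in>UNIV. S k l \<omega>))"
    by (simp add: gram_dev_def U_def V_def S_def fun_eq_iff)
  show "integrable M (gram_dev n)" unfolding Qeq using Ui Vi Si by simp
  have "expectation (gram_dev n) = (\<Sum>l\<in>UNIV. expectation (U l))
      + (\<Sum>k\<in>UNIV. \<Sum>l\<in>UNIV. expectation (V k l)) + (\<Sum>k\<in>UNIV. \<Sum>l\<in>UNIV. expectation (S k l))"
    unfolding Qeq using Ui Vi Si
    by (simp add: Bochner_Integration.integral_sum Bochner_Integration.integrable_sum)
  also have "\<dots> \<le> (\<Sum>l\<in>(UNIV::'p set). real n * \<sigma>z\<^sup>2)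
      + (\<Sum>k\<in>UNIV. \<Sum>l\<in>(UNIV::'p set). \<sigma>z\<^sup>2 * (\<Sum>j<n. (m n j $ k)\<^sup>2))
      + (\<Sum>k\<in>(UNIV::'p set). \<Sum>l\<in>(UNIV::'p set). 14 * real n * \<sigma>z ^ 4)"
    unfolding Ue Ve by (intro add_mono order_refl sum_mono Se)
  also have "(\<Sum>k\<in>UNIV. \<Sum>l\<in>(UNIV::'p set). \<sigma>z\<^sup>2 * (\<Sum>j<n. (m n j $ k)\<^sup>2))
           = real CARD('p) * \<sigma>z\<^sup>2 * (\<Sum>j<n. (norm (m n j))\<^sup>2)"
    by (simp add: norm_sq_eq_sum_components sum_distrib_left sum.swap[of _ UNIV] mult_ac)
  also have "\<dots> \<le> real CARD('p) * \<sigma>z\<^sup>2 * (Cm * real n)"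
    using energy by (intro mult_left_mono) auto
  finally show "expectation (gram_dev n) \<le> real n * gram_rate"
    by (simp add: gram_rate_def algebra_simps)
qed

lemma noise_energy_sq_expectation:
  "integrable M (noise_energy_sq n)"
  "expectation (noise_energy_sq n) \<le> real n * real CARD('p) * real CARD('p) * (3 * \<sigma>z ^ 4)"
  using expectation_Etr_energy_sq_le[where n=n] unfolding noise_energy_sq_def by auto

lemma resp_noise_energy_expectation:
  assumes energy: "(\<Sum>j<n. (norm (m n j))\<^sup>2) \<le> Cm * real n"
  shows "integrable M (resp_noise_energy n)" and "expectation (resp_noise_energy n) \<le> real n * resp_rate"
proof -
  define p where "p = real CARD('p)"
  define A1 where "A1 \<omega> = (\<Sum>j<n. \<epsilon>tr n \<omega> j)\<^sup>2" for \<omega>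
  define A2 where "A2 k \<omega> = (\<Sum>j<n. \<epsilon>tr n \<omega> j * (m n j $ k + Etr n \<omega> j $ k))\<^sup>2" for k \<omega>
  define A3 where "A3 \<omega> = (\<Sum>j<n. \<Sum>k\<in>UNIV. (Etr n \<omega> j $ k)\<^sup>2)" for \<omega>
  define A4 where "A4 \<omega> = (\<Sum>j<n. (1 + 2 * (norm (m n j))\<^sup>2 + 2 * (\<Sum>k\<in>UNIV. (Etr n \<omega> j $ k)\<^sup>2))
      * (\<epsilon>tr n \<omega> j)\<^sup>2)" for \<omega>
  define Em where "Em = (\<Sum>j<n. (norm (m n j))\<^sup>2)"
  have resp_eq: "resp_noise_energy n = (\<lambda>\<omega>. A1 \<omega> + (\<Sum>k\<in>UNIV. A2 k \<omega>) + A3 \<omega> + A4 \<omega>)"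
    by (simp add: resp_noise_energy_def A1_def A2_def A3_def A4_def fun_eq_iff)
  have A1: "integrable M A1" "expectation A1 \<le> real n * (2 * \<sigma>\<^sup>2)"
    using expectation_\<epsilon>tr_cross_sq_le[where a="\<lambda>_. 1" and b=0 and n=n] unfolding A1_def by auto
  have A2: "integrable M (A2 k)"
    "expectation (A2 k) \<le> (\<Sum>j<n. 2 * (m n j $ k)\<^sup>2 * \<sigma>\<^sup>2 + 2 * (3 * \<sigma> ^ 4 + 3 * \<sigma>z ^ 4))" for k
    using expectation_\<epsilon>tr_cross_sq_le[where a="\<lambda>j. m n j $ k" and b=1 and n=n and k=k]
    unfolding A2_def by auto
  have "(\<Sum>k\<in>UNIV. expectation (A2 k))
      \<le> (\<Sum>k\<in>UNIV. \<Sum>j<n. 2 * (m n j $ k)\<^sup>2 * \<sigma>\<^sup>2 + 2 * (3 * \<sigma> ^ 4 + 3 * \<sigma>z ^ 4))"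
    by (intro sum_mono A2)
  also have "\<dots> = 2 * \<sigma>\<^sup>2 * Em + real n * p * (6 * \<sigma> ^ 4 + 6 * \<sigma>z ^ 4)"
    by (simp add: Em_def p_def sum.distrib norm_sq_eq_sum_components sum_distrib_left
        sum.swap[of _ UNIV] mult_ac)
  finally have A2_sum: "(\<Sum>k\<in>UNIV. expectation (A2 k)) \<le> 2 * \<sigma>\<^sup>2 * Em + real n * p * (6 * \<sigma> ^ 4 + 6 * \<sigma>z ^ 4)" .
  have A3: "integrable M A3" "expectation A3 = real n * p * \<sigma>z\<^sup>2"
    using expectation_Etr_energy[where n=n] unfolding A3_def p_def by auto
  have A4: "integrable M A4"
    "expectation A4 \<le> (\<Sum>j<n. (1 + 2 * (norm (m n j))\<^sup>2) * \<sigma>\<^sup>2 + p * (6 * \<sigma>z ^ 4 + 6 * \<sigma> ^ 4))"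
    using expectation_weighted_\<epsilon>tr_sq_le[where w="\<lambda>j. 1 + 2 * (norm (m n j))\<^sup>2" and n=n]
    unfolding A4_def p_def by (auto simp: add_nonneg_nonneg)
  have A4_eq: "(\<Sum>j<n. (1 + 2 * (norm (m n j))\<^sup>2) * \<sigma>\<^sup>2 + p * (6 * \<sigma>z ^ 4 + 6 * \<sigma> ^ 4))
      = real n * \<sigma>\<^sup>2 + 2 * \<sigma>\<^sup>2 * Em + real n * p * (6 * \<sigma>z ^ 4 + 6 * \<sigma> ^ 4)"
    by (simp add: Em_def sum.distrib sum_distrib_left algebra_simps)
  show "integrable M (resp_noise_energy n)" unfolding resp_eq using A1 A2 A3 A4 by simp
  have "expectation (resp_noise_energy n)
      = expectation A1 + (\<Sum>k\<in>UNIV. expectation (A2 k)) + expectation A3 + expectation A4"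
    unfolding resp_eq using A1 A2 A3 A4 by (simp add: Bochner_Integration.integrable_sum)
  also have "\<dots> \<le> real n * (3 * \<sigma>\<^sup>2 + p * \<sigma>z\<^sup>2 + 12 * p * (\<sigma> ^ 4 + \<sigma>z ^ 4)) + 4 * \<sigma>\<^sup>2 * Em"
    using A1(2) A2_sum A3(2) A4(2) unfolding A4_eq by (simp add: algebra_simps)
  also have "\<dots> \<le> real n * (3 * \<sigma>\<^sup>2 + p * \<sigma>z\<^sup>2 + 12 * p * (\<sigma> ^ 4 + \<sigma>z ^ 4)) + 4 * \<sigma>\<^sup>2 * (Cm * real n)"
    using energy unfolding Em_def by (intro add_left_mono mult_left_mono) auto
  finally show "expectation (resp_noise_energy n) \<le> real n * resp_rate"
    by (simp add: resp_rate_def p_def algebra_simps)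
qed

definition "bad_event \<rho> K n = {\<omega>\<in>space M. (gram_tol * real n)\<^sup>2 \<le> gram_dev n \<omega>
    \<or> (\<rho> / 8 * real n)\<^sup>2 \<le> noise_energy_sq n \<omega> \<or> K * real n \<le> resp_noise_energy n \<omega>}"

lemma bad_event_sets [measurable]: "bad_event \<rho> K n \<in> sets M"
  unfolding bad_event_def by measurable

lemma prob_bad_event_le:
  assumes n: "n > 0" and energy: "(\<Sum>j<n. (norm (m n j))\<^sup>2) \<le> Cm * real n"
    and \<rho>: "\<rho> > 0" and K: "K > 0"
  shows "prob (bad_event \<rho> K n) \<le> gram_rate / gram_tol\<^sup>2 / real n
      + 3 * real CARD('p) * real CARD('p) * \<sigma>z ^ 4 / (\<rho> / 8)\<^sup>2 / real n + resp_rate / K"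
proof -
  define Bq where "Bq = {\<omega>\<in>space M. (gram_tol * real n)\<^sup>2 \<le> gram_dev n \<omega>}"
  define Bm where "Bm = {\<omega>\<in>space M. (\<rho> / 8 * real n)\<^sup>2 \<le> noise_energy_sq n \<omega>}"
  define Br where "Br = {\<omega>\<in>space M. K * real n \<le> resp_noise_energy n \<omega>}"
  have sets: "Bq \<in> sets M" "Bm \<in> sets M" "Br \<in> sets M"
    unfolding Bq_def Bm_def Br_def by measurable
  have rn: "real n > 0" using n by simp
  have "prob Bq \<le> real n * gram_rate / (gram_tol * real n)\<^sup>2"
    unfolding Bq_def using gram_dev_expectation[OF energy] gram_dev_nonneg gram_tol_pos rn
    by (intro prob_ge_le_bound) auto
  also have "\<dots> = gram_rate / gram_tol\<^sup>2 / real n" using rn by (simp add: power2_eq_square)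
  finally have Bq_le: "prob Bq \<le> gram_rate / gram_tol\<^sup>2 / real n" .
  have "prob Bm \<le> real n * real CARD('p) * real CARD('p) * (3 * \<sigma>z ^ 4) / (\<rho> / 8 * real n)\<^sup>2"
    unfolding Bm_def using noise_energy_sq_expectation noise_energy_sq_nonneg \<rho> rn
    by (intro prob_ge_le_bound) auto
  also have "\<dots> = 3 * real CARD('p) * real CARD('p) * \<sigma>z ^ 4 / (\<rho> / 8)\<^sup>2 / real n"
    using rn by (simp add: power2_eq_square)
  finally have Bm_le: "prob Bm \<le> 3 * real CARD('p) * real CARD('p) * \<sigma>z ^ 4 / (\<rho> / 8)\<^sup>2 / real n" .
  have "prob Br \<le> real n * resp_rate / (K * real n)"
    unfolding Br_def using resp_noise_energy_expectation[OF energy] resp_noise_energy_nonneg K rn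
    by (intro prob_ge_le_bound) auto
  then have Br_le: "prob Br \<le> resp_rate / K" using rn by simp
  have "bad_event \<rho> K n = Bq \<union> Bm \<union> Br" by (auto simp: bad_event_def Bq_def Bm_def Br_def)
  then have "prob (bad_event \<rho> K n) \<le> prob Bq + prob Bm + prob Br"
    using sets measure_Un_le[of "Bq \<union> Bm" M Br] measure_Un_le[of Bq M Bm] by auto
  then show ?thesis using Bq_le Bm_le Br_le by linarith
qed

lemma exceptional_set:
  assumes r: "r > 0" and K: "K > 0" and \<rho>: "0 < \<rho>" "\<rho> \<le> c0 / 4"
  shows "eventually (\<lambda>n. \<exists>A\<in>sets M. prob A < r + resp_rate / K \<and> (\<forall>\<omega>\<in>space M - A.
           (\<Sum>i<n. (fit n \<omega> i)\<^sup>2) \<le> fit_bound K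
           \<and> (\<Sum>i<n. (loo_fit n \<omega> i - fit n \<omega> i)\<^sup>2) \<le> 2 * \<rho> / (c0 / 2) * loo_bound K)) sequentially"
proof -
  have rows: "eventually (\<lambda>n. \<forall>j<n. (norm (m n j))\<^sup>2 \<le> \<rho> / 8 * real n) sequentially"
    using mean_rows_small[of "\<rho> / 8"] \<rho> by simp
  have small: "eventually (\<lambda>n. 4 / \<rho> / real n < 1) sequentially"
      "eventually (\<lambda>n. gram_rate / gram_tol\<^sup>2 / real n < r / 2) sequentially"
      "eventually (\<lambda>n. 3 * real CARD('p) * real CARD('p) * \<sigma>z ^ 4 / (\<rho> / 8)\<^sup>2 / real n < r / 2)
         sequentially"
    using r by (intro eventually_const_over_n_less; simp)+
  show ?thesis
    using mean_energy mean_average signal_energy rows small eventually_gt_at_top[of 0]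
  proof eventually_elim
    case (elim n)
    then have n: "n > 0" and n_large: "1 \<le> \<rho> / 4 * real n" using \<rho> by (auto simp: field_simps)
    have "prob (bad_event \<rho> K n) < r + resp_rate / K"
      using prob_bad_event_le[OF n elim(1) \<rho>(1) K] elim(6,7) by linarith
    moreover have "(\<Sum>i<n. (fit n \<omega> i)\<^sup>2) \<le> fit_bound K
        \<and> (\<Sum>i<n. (loo_fit n \<omega> i - fit n \<omega> i)\<^sup>2) \<le> 2 * \<rho> / (c0 / 2) * loo_bound K"
      if "\<omega> \<in> space M - bad_event \<rho> K n" for \<omega>
      using fit_bounds[OF n n_large \<rho> elim(2) elim(1) elim(3) elim(4)] that
      by (auto simp: bad_event_def)
    ultimately show ?case using bad_event_sets by blast
  qed
qed

lemma resp_rate_pos: "resp_rate > 0"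
  unfolding resp_rate_def using sig design_constants_nonneg(1)
  by (intro add_pos_nonneg mult_nonneg_nonneg) auto

lemma fit_bound_nonneg: "K \<ge> 0 \<Longrightarrow> fit_bound K \<ge> 0"
  unfolding fit_bound_def using design_constants_nonneg c0_pos by simp

lemma loo_bound_nonneg: "K \<ge> 0 \<Longrightarrow> loo_bound K \<ge> 0"
  unfolding loo_bound_def using fit_bound_nonneg design_constants_nonneg c0_pos by simp

lemma resp_rate_div_less: "\<eta> > 0 \<Longrightarrow> resp_rate / (2 * resp_rate / \<eta> + 1) < \<eta> / 2"
  using resp_rate_pos by (simp add: field_simps)

lemma loo_fit_diff_small_oP: "small_oP M (\<lambda>n \<omega>. sqrt (\<Sum>i<n. (loo_fit n \<omega> i - fit n \<omega> i)\<^sup>2))"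
proof (rule small_oP_if_exceptional_sets)
  fix \<delta> \<eta> :: real assume \<delta>: "\<delta> > 0" and \<eta>: "\<eta> > 0"
  define K where "K = 2 * resp_rate / \<eta> + 1"
  have K: "K > 0" unfolding K_def using resp_rate_pos \<eta> by (simp add: add_pos_nonneg)
  have K_large: "resp_rate / K < \<eta> / 2" unfolding K_def by (rule resp_rate_div_less[OF \<eta>])
  define \<gamma> where "\<gamma> = min 1 (\<delta>\<^sup>2 / (loo_bound K + 1))"
  define \<rho> where "\<rho> = \<gamma> * c0 / 4"
  have \<gamma>: "0 < \<gamma>" "\<gamma> \<le> 1" unfolding \<gamma>_def using \<delta> loo_bound_nonneg[of K] K by auto
  then have \<rho>: "0 < \<rho>" "\<rho> \<le> c0 / 4" unfolding \<rho>_def using c0_pos by auto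
  have "2 * \<rho> / (c0 / 2) * loo_bound K = \<gamma> * loo_bound K" unfolding \<rho>_def using c0_pos by simp
  also have "\<dots> \<le> \<delta>\<^sup>2 / (loo_bound K + 1) * loo_bound K"
    using loo_bound_nonneg[of K] K by (intro mult_right_mono) (auto simp: \<gamma>_def)
  also have "\<dots> < \<delta>\<^sup>2" using loo_bound_nonneg[of K] K \<delta> by (simp add: field_simps)
  finally have small: "2 * \<rho> / (c0 / 2) * loo_bound K < \<delta>\<^sup>2" .
  have "\<eta> / 2 > 0" using \<eta> by simp
  from exceptional_set[OF this K \<rho>]
  show "eventually (\<lambda>n. \<exists>A\<in>sets M. prob A < \<eta>
          \<and> (\<forall>\<omega>\<in>space M - A. \<bar>sqrt (\<Sum>i<n. (loo_fit n \<omega> i - fit n \<omega> i)\<^sup>2)\<bar> \<le> \<delta>)) sequentially"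
  proof eventually_elim
    case (elim n)
    then obtain A where A: "A \<in> sets M" "prob A < \<eta> / 2 + resp_rate / K"
      and bound: "\<And>\<omega>. \<omega> \<in> space M - A \<Longrightarrow> (\<Sum>i<n. (loo_fit n \<omega> i - fit n \<omega> i)\<^sup>2)
                                         \<le> 2 * \<rho> / (c0 / 2) * loo_bound K"
      by blast
    have "\<bar>sqrt (\<Sum>i<n. (loo_fit n \<omega> i - fit n \<omega> i)\<^sup>2)\<bar> \<le> \<delta>" if "\<omega> \<in> space M - A" for \<omega>
      using real_sqrt_le_mono[OF order_trans[OF bound[OF that] less_imp_le[OF small]]] \<delta>
      by (simp add: sum_nonneg)
    moreover have "prob A < \<eta>" using A(2) K_large by linarith
    ultimately show ?case using A(1) by blast
  qed
qed

lemma fits_bounded_off_exceptional_set: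
  assumes \<eta>: "\<eta> > 0"
  shows "\<exists>C. eventually (\<lambda>n. \<exists>A\<in>sets M. prob A < \<eta> \<and> (\<forall>\<omega>\<in>space M - A.
           (\<Sum>i<n. (fit n \<omega> i)\<^sup>2) \<le> C \<and> (\<Sum>i<n. (loo_fit n \<omega> i - fit n \<omega> i)\<^sup>2) \<le> C)) sequentially"
proof -
  define K where "K = 2 * resp_rate / \<eta> + 1"
  have K: "K > 0" unfolding K_def using resp_rate_pos \<eta> by (simp add: add_pos_nonneg)
  have K_large: "resp_rate / K < \<eta> / 2" unfolding K_def by (rule resp_rate_div_less[OF \<eta>])
  have \<rho>: "0 < c0 / 4" "c0 / 4 \<le> c0 / 4" using c0_pos by auto
  have "\<eta> / 2 > 0" using \<eta> by simp
  from exceptional_set[OF this K \<rho>]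
  have "eventually (\<lambda>n. \<exists>A\<in>sets M. prob A < \<eta> \<and> (\<forall>\<omega>\<in>space M - A.
      (\<Sum>i<n. (fit n \<omega> i)\<^sup>2) \<le> fit_bound K + loo_bound K
      \<and> (\<Sum>i<n. (loo_fit n \<omega> i - fit n \<omega> i)\<^sup>2) \<le> fit_bound K + loo_bound K)) sequentially"
  proof eventually_elim
    case (elim n)
    then obtain A where A: "A \<in> sets M" "prob A < \<eta> / 2 + resp_rate / K"
      and bound: "\<And>\<omega>. \<omega> \<in> space M - A \<Longrightarrow> (\<Sum>i<n. (fit n \<omega> i)\<^sup>2) \<le> fit_bound K
          \<and> (\<Sum>i<n. (loo_fit n \<omega> i - fit n \<omega> i)\<^sup>2) \<le> 2 * (c0 / 4) / (c0 / 2) * loo_bound K"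
      by blast
    have "2 * (c0 / 4) / (c0 / 2) = 1" using c0_pos by simp
    then have "(\<Sum>i<n. (fit n \<omega> i)\<^sup>2) \<le> fit_bound K + loo_bound K
        \<and> (\<Sum>i<n. (loo_fit n \<omega> i - fit n \<omega> i)\<^sup>2) \<le> fit_bound K + loo_bound K"
      if "\<omega> \<in> space M - A" for \<omega>
      using bound[OF that] fit_bound_nonneg[of K] loo_bound_nonneg[of K] K by auto
    moreover have "prob A < \<eta>" using A(2) K_large by linarith
    ultimately show ?case using A(1) by blast
  qed
  then show ?thesis by blast
qed

lemma fit_big_OP: "big_OP M (\<lambda>n \<omega>. sqrt (\<Sum>i<n. (fit n \<omega> i)\<^sup>2))"
proof (rule big_OP_if_exceptional_sets)
  fix \<eta> :: real assume "\<eta> > 0"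
  then obtain C where C: "eventually (\<lambda>n. \<exists>A\<in>sets M. prob A < \<eta> \<and> (\<forall>\<omega>\<in>space M - A.
      (\<Sum>i<n. (fit n \<omega> i)\<^sup>2) \<le> C \<and> (\<Sum>i<n. (loo_fit n \<omega> i - fit n \<omega> i)\<^sup>2) \<le> C)) sequentially"
    using fits_bounded_off_exceptional_set by blast
  have "eventually (\<lambda>n. \<exists>A\<in>sets M. prob A < \<eta>
      \<and> (\<forall>\<omega>\<in>space M - A. \<bar>sqrt (\<Sum>i<n. (fit n \<omega> i)\<^sup>2)\<bar> \<le> sqrt C)) sequentially"
    using C
  proof eventually_elim
    case (elim n)
    then obtain A where "A \<in> sets M" "prob A < \<eta>"
      and "\<And>\<omega>. \<omega> \<in> space M - A \<Longrightarrow> (\<Sum>i<n. (fit n \<omega> i)\<^sup>2) \<le> C" by blast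
    then show ?case by (auto simp: sum_nonneg intro!: bexI[of _ A] real_sqrt_le_mono)
  qed
  then show "\<exists>K. eventually (\<lambda>n. \<exists>A\<in>sets M. prob A < \<eta>
      \<and> (\<forall>\<omega>\<in>space M - A. \<bar>sqrt (\<Sum>i<n. (fit n \<omega> i)\<^sup>2)\<bar> \<le> K)) sequentially" by blast
qed

lemma loo_fit_big_OP: "big_OP M (\<lambda>n \<omega>. sqrt (\<Sum>i<n. (loo_fit n \<omega> i)\<^sup>2))"
proof (rule big_OP_if_exceptional_sets)
  fix \<eta> :: real assume "\<eta> > 0"
  then obtain C where C: "eventually (\<lambda>n. \<exists>A\<in>sets M. prob A < \<eta> \<and> (\<forall>\<omega>\<in>space M - A.
      (\<Sum>i<n. (fit n \<omega> i)\<^sup>2) \<le> C \<and> (\<Sum>i<n. (loo_fit n \<omega> i - fit n \<omega> i)\<^sup>2) \<le> C)) sequentially"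
    using fits_bounded_off_exceptional_set by blast
  have "eventually (\<lambda>n. \<exists>A\<in>sets M. prob A < \<eta>
      \<and> (\<forall>\<omega>\<in>space M - A. \<bar>sqrt (\<Sum>i<n. (loo_fit n \<omega> i)\<^sup>2)\<bar> \<le> sqrt (4 * C))) sequentially"
    using C
  proof eventually_elim
    case (elim n)
    then obtain A where A: "A \<in> sets M" "prob A < \<eta>"
      and bound: "\<And>\<omega>. \<omega> \<in> space M - A \<Longrightarrow> (\<Sum>i<n. (fit n \<omega> i)\<^sup>2) \<le> C
          \<and> (\<Sum>i<n. (loo_fit n \<omega> i - fit n \<omega> i)\<^sup>2) \<le> C" by blast
    have "(\<Sum>i<n. (loo_fit n \<omega> i)\<^sup>2) \<le> 4 * C" if "\<omega> \<in> space M - A" for \<omega>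
      using sum_squares_add_le[of "fit n \<omega>" "\<lambda>i. loo_fit n \<omega> i - fit n \<omega> i" "{..<n}"] bound[OF that]
      by simp
    then show ?case using A by (auto simp: sum_nonneg intro!: bexI[of _ A] real_sqrt_le_mono)
  qed
  then show "\<exists>K. eventually (\<lambda>n. \<exists>A\<in>sets M. prob A < \<eta>
      \<and> (\<forall>\<omega>\<in>space M - A. \<bar>sqrt (\<Sum>i<n. (loo_fit n \<omega> i)\<^sup>2)\<bar> \<le> K)) sequentially" by blast
qed

end

section \<open>Regressors with a limiting second moment\<close>

lemma vector_matrix_mult_sum: "(\<Sum>j\<in>S. x j) v* (A::real^'b^'a) = (\<Sum>j\<in>S. x j v* A)"
  by (induction S rule: infinite_finite_induct) (auto simp: vector_matrix_left_distrib)

lemma vector_matrix_mult_scaleR: "(c *\<^sub>R x) v* (A::real^'b^'a) = c *\<^sub>R (x v* A)"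
  by (simp add: vec_eq_iff vector_matrix_mult_def sum_distrib_left mult.assoc)

lemma norm_vector_matrix_mult_le:
  "norm (x v* (A::real^'b^'a)) \<le> (\<Sum>i\<in>UNIV. \<Sum>k\<in>UNIV. \<bar>A $ i $ k\<bar>) * norm x"
proof -
  have "norm (x v* A) \<le> (\<Sum>k\<in>UNIV. \<bar>(x v* A) $ k\<bar>)" by (rule norm_le_l1_cart)
  also have "\<dots> \<le> (\<Sum>k\<in>UNIV. \<Sum>i\<in>UNIV. \<bar>A $ i $ k\<bar> * norm x)"
  proof (rule sum_mono)
    fix k
    have "\<bar>(x v* A) $ k\<bar> \<le> (\<Sum>i\<in>UNIV. \<bar>x $ i * A $ i $ k\<bar>)"
      unfolding vector_matrix_mult_def by (simp add: sum_abs)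
    also have "\<dots> \<le> (\<Sum>i\<in>UNIV. \<bar>A $ i $ k\<bar> * norm x)"
      by (intro sum_mono) (metis abs_ge_zero abs_mult component_le_norm_cart mult.commute mult_right_mono)
    finally show "\<bar>(x v* A) $ k\<bar> \<le> (\<Sum>i\<in>UNIV. \<bar>A $ i $ k\<bar> * norm x)" .
  qed
  also have "\<dots> = (\<Sum>i\<in>UNIV. \<Sum>k\<in>UNIV. \<bar>A $ i $ k\<bar>) * norm x"
    by (subst sum.swap) (simp add: sum_distrib_right)
  finally show ?thesis .
qed

lemma row_energy_bound:
  fixes X :: "nat \<Rightarrow> nat \<Rightarrow> real^'e"
  assumes Sigma: "(\<lambda>n. (1 / real n) *\<^sub>R (\<Sum>i<n. outerp (X n i))) \<longlonglongrightarrow> \<Sigma>"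
  shows "\<exists>C. eventually (\<lambda>n. (\<Sum>i<n. (norm (X n i))\<^sup>2) \<le> C * real n) sequentially"
proof -
  let ?L = "\<Sum>e\<in>UNIV. \<Sigma> $ e $ e"
  have trace: "(\<Sum>e\<in>UNIV. ((1 / real n) *\<^sub>R (\<Sum>i<n. outerp (X n i))) $ e $ e)
      = (\<Sum>i<n. (norm (X n i))\<^sup>2) / real n" for n
  proof -
    have "((1 / real n) *\<^sub>R (\<Sum>i<n. outerp (X n i))) $ e $ e = (\<Sum>i<n. (X n i $ e)\<^sup>2) / real n" for e
      by (simp add: outerp_def power2_eq_square)
    then have "(\<Sum>e\<in>UNIV. ((1 / real n) *\<^sub>R (\<Sum>i<n. outerp (X n i))) $ e $ e)
        = (\<Sum>e\<in>UNIV. \<Sum>i<n. (X n i $ e)\<^sup>2) / real n"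
      by (simp add: sum_divide_distrib)
    also have "(\<Sum>e\<in>UNIV. \<Sum>i<n. (X n i $ e)\<^sup>2) = (\<Sum>i<n. (norm (X n i))\<^sup>2)"
      by (subst sum.swap) (simp add: norm_sq_eq_sum_components)
    finally show ?thesis .
  qed
  have "(\<lambda>n. (\<Sum>i<n. (norm (X n i))\<^sup>2) / real n) \<longlonglongrightarrow> ?L"
    unfolding trace[symmetric] by (intro tendsto_sum tendsto_vec_nth Sigma)
  then have "eventually (\<lambda>n. (\<Sum>i<n. (norm (X n i))\<^sup>2) / real n < \<bar>?L\<bar> + 1) sequentially"
    by (rule order_tendstoD) simp
  then have "eventually (\<lambda>n. (\<Sum>i<n. (norm (X n i))\<^sup>2) \<le> (\<bar>?L\<bar> + 1) * real n) sequentially"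
    using eventually_gt_at_top[of 0] by eventually_elim (simp add: field_simps)
  then show ?thesis by blast
qed

lemma signal_energy_bound:
  fixes X :: "nat \<Rightarrow> nat \<Rightarrow> real^'e"
  assumes alpha: "(\<lambda>n. sqrt (real n) *\<^sub>R \<beta>0 n) \<longlonglongrightarrow> \<alpha>0"
    and Sigma: "(\<lambda>n. (1 / real n) *\<^sub>R (\<Sum>i<n. outerp (X n i))) \<longlonglongrightarrow> \<Sigma>"
  shows "\<exists>B. eventually (\<lambda>n. (\<Sum>i<n. (X n i \<bullet> \<beta>0 n)\<^sup>2) \<le> B) sequentially"
proof -
  define q where "q n = (\<Sum>e\<in>UNIV. \<Sum>f\<in>UNIV. (sqrt (real n) *\<^sub>R \<beta>0 n) $ e * (sqrt (real n) *\<^sub>R \<beta>0 n) $ f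
      * ((1 / real n) *\<^sub>R (\<Sum>i<n. outerp (X n i))) $ e $ f)" for n
  have "q \<longlonglongrightarrow> (\<Sum>e\<in>UNIV. \<Sum>f\<in>UNIV. \<alpha>0 $ e * \<alpha>0 $ f * \<Sigma> $ e $ f)"
    unfolding q_def by (intro tendsto_sum tendsto_mult tendsto_vec_nth Sigma alpha)
  then obtain B where B: "eventually (\<lambda>n. q n < B) sequentially"
    using gt_ex order_tendstoD(2) by blast
  have q_eq: "q n = (\<Sum>i<n. (X n i \<bullet> \<beta>0 n)\<^sup>2)" if "n > 0" for n
  proof -
    have "(\<Sum>i<n. (X n i \<bullet> \<beta>0 n)\<^sup>2)
        = (\<Sum>i<n. \<Sum>e\<in>UNIV. \<Sum>f\<in>UNIV. \<beta>0 n $ e * \<beta>0 n $ f * (X n i $ e * X n i $ f))"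
      by (simp add: inner_vec_def power2_eq_square sum_product mult_ac)
    also have "\<dots> = (\<Sum>e\<in>UNIV. \<Sum>f\<in>UNIV. \<beta>0 n $ e * \<beta>0 n $ f * (\<Sum>i<n. X n i $ e * X n i $ f))"
      by (simp add: sum_distrib_left sum.swap[of _ "{..<n}"])
    also have "\<dots> = q n"
      unfolding q_def using that by (intro sum.cong refl) (simp add: outerp_def field_simps)
    finally show ?thesis by simp
  qed
  have "eventually (\<lambda>n. (\<Sum>i<n. (X n i \<bullet> \<beta>0 n)\<^sup>2) \<le> B) sequentially"
    using B eventually_gt_at_top[of 0] by eventually_elim (simp add: q_eq[symmetric])
  then show ?thesis by blast
qed

lemma max_row_sq_small:
  fixes X :: "nat \<Rightarrow> nat \<Rightarrow> real^'e"
  assumes maxrow: "(\<lambda>n. (MAX i\<in>{..<n}. norm (X n i)) / real n powr (1/3)) \<longlonglongrightarrow> 0" and r: "r > 0"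
  shows "eventually (\<lambda>n. \<forall>j<n. (norm (X n j))\<^sup>2 \<le> r * real n) sequentially"
proof -
  have "eventually (\<lambda>n. (MAX i\<in>{..<n}. norm (X n i)) / real n powr (1/3) < sqrt r) sequentially"
    using order_tendstoD(2)[OF maxrow, of "sqrt r"] r by simp
  then show ?thesis using eventually_gt_at_top[of 0]
  proof eventually_elim
    case (elim n)
    show ?case
    proof (intro allI impI)
      fix j assume "j < n"
      then have "norm (X n j) \<le> (MAX i\<in>{..<n}. norm (X n i))" by (intro Max_ge) auto
      also have "\<dots> < sqrt r * real n powr (1/3)" using elim by (simp add: field_simps)
      also have "\<dots> \<le> sqrt r * real n powr (1/2)"
        using elim(2) r by (intro mult_left_mono powr_mono) auto
      also have "\<dots> = sqrt (r * real n)" by (simp add: powr_half_sqrt real_sqrt_mult)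
      finally show "(norm (X n j))\<^sup>2 \<le> r * real n"
        using r power_mono[of "norm (X n j)" "sqrt (r * real n)" 2] by simp
    qed
  qed
qed

lemma eventually_scaled_bound_small:
  assumes small: "\<And>r. r > 0 \<Longrightarrow> eventually (\<lambda>n. \<forall>j<n. f n j \<le> r * real n) sequentially"
    and c: "c \<ge> 0" and r: "r > 0"
  shows "eventually (\<lambda>n. \<forall>j<n. c * f n j \<le> r * real n) sequentially"
proof -
  have pos: "c + 1 > 0" using c by simp
  have "c * (r / (c + 1)) \<le> r" using c r pos by (simp add: field_simps)
  then have scaled: "c * (r / (c + 1) * real n) \<le> r * real n" for n
    using mult_right_mono[of "c * (r / (c + 1))" r "real n"] by (simp add: mult.assoc)
  have "r / (c + 1) > 0" using r pos by simp
  from small[OF this] show ?thesis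
    by eventually_elim (meson c mult_left_mono order_trans scaled)
qed

lemma ridge_design_of_regressors:
  fixes X :: "nat \<Rightarrow> nat \<Rightarrow> real^'e" and \<Gamma> :: "real^'p^'e"
  assumes "gaussian_noise M E \<epsilon> \<sigma> \<sigma>z" and lam_nonneg: "\<And>n. lam n \<ge> 0"
    and alpha: "(\<lambda>n. sqrt (real n) *\<^sub>R \<beta>0 n) \<longlonglongrightarrow> \<alpha>0"
    and Sigma: "(\<lambda>n. (1 / real n) *\<^sub>R (\<Sum>i<n. outerp (X n i))) \<longlonglongrightarrow> \<Sigma>"
    and Theta: "(\<lambda>n. (1 / real n) *\<^sub>R (\<Sum>i<n. X n i)) \<longlonglongrightarrow> \<Theta>"
    and maxrow: "(\<lambda>n. (MAX i\<in>{..<n}. norm (X n i)) / real n powr (1/3)) \<longlonglongrightarrow> 0"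
  shows "\<exists>Cm Mb B. ridge_design M E \<epsilon> \<sigma> \<sigma>z (\<lambda>n j. X n j v* \<Gamma>) (\<lambda>n j. X n j \<bullet> \<beta>0 n) lam Cm Mb B"
proof -
  define g where "g = (\<Sum>i\<in>UNIV. \<Sum>k\<in>UNIV. \<bar>\<Gamma> $ i $ k\<bar>)"
  have g: "g \<ge> 0" unfolding g_def by (intro sum_nonneg) auto
  have mean_sq: "(norm (X n j v* \<Gamma>))\<^sup>2 \<le> g\<^sup>2 * (norm (X n j))\<^sup>2" for n j
    using power_mono[OF norm_vector_matrix_mult_le[of "X n j" \<Gamma>, folded g_def] norm_ge_zero, of 2]
    by (simp add: power_mult_distrib)
  obtain C where C: "eventually (\<lambda>n. (\<Sum>i<n. (norm (X n i))\<^sup>2) \<le> C * real n) sequentially"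
    using row_energy_bound[OF Sigma] by blast
  have "eventually (\<lambda>n. (\<Sum>j<n. (norm (X n j v* \<Gamma>))\<^sup>2) \<le> g\<^sup>2 * C * real n) sequentially"
    using C
  proof eventually_elim
    case (elim n)
    have "(\<Sum>j<n. (norm (X n j v* \<Gamma>))\<^sup>2) \<le> g\<^sup>2 * (\<Sum>j<n. (norm (X n j))\<^sup>2)"
      unfolding sum_distrib_left by (intro sum_mono mean_sq)
    also have "\<dots> \<le> g\<^sup>2 * (C * real n)" using elim by (intro mult_left_mono) auto
    finally show ?case by (simp add: mult.assoc)
  qed
  moreover have "eventually (\<lambda>n. norm ((1 / real n) *\<^sub>R (\<Sum>j<n. X n j v* \<Gamma>)) \<le> g * (norm \<Theta> + 1))
      sequentially"
    using order_tendstoD(2)[OF tendsto_norm[OF Theta], of "norm \<Theta> + 1", OF less_add_one]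
  proof eventually_elim
    case (elim n)
    have "norm ((1 / real n) *\<^sub>R (\<Sum>j<n. X n j v* \<Gamma>)) \<le> g * norm ((1 / real n) *\<^sub>R (\<Sum>j<n. X n j))"
      unfolding g_def vector_matrix_mult_sum[symmetric] vector_matrix_mult_scaleR[symmetric]
      by (rule norm_vector_matrix_mult_le)
    also have "\<dots> \<le> g * (norm \<Theta> + 1)" using elim g by (intro mult_left_mono) auto
    finally show ?case .
  qed
  moreover obtain B where "eventually (\<lambda>n. (\<Sum>i<n. (X n i \<bullet> \<beta>0 n)\<^sup>2) \<le> B) sequentially"
    using signal_energy_bound[OF alpha Sigma] by blast
  moreover have "eventually (\<lambda>n. \<forall>j<n. (norm (X n j v* \<Gamma>))\<^sup>2 \<le> r * real n) sequentially"
    if "r > 0" for r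
  proof -
    have rows: "\<And>r. r > 0 \<Longrightarrow> eventually (\<lambda>n. \<forall>j<n. (norm (X n j))\<^sup>2 \<le> r * real n) sequentially"
      by (rule max_row_sq_small[OF maxrow])
    have "eventually (\<lambda>n. \<forall>j<n. g\<^sup>2 * (norm (X n j))\<^sup>2 \<le> r * real n) sequentially"
      by (rule eventually_scaled_bound_small[OF rows]) (use \<open>r > 0\<close> in auto)
    then show ?thesis by eventually_elim (meson mean_sq order_trans)
  qed
  ultimately have "ridge_design M E \<epsilon> \<sigma> \<sigma>z (\<lambda>n j. X n j v* \<Gamma>) (\<lambda>n j. X n j \<bullet> \<beta>0 n) lam
      (g\<^sup>2 * C) (g * (norm \<Theta> + 1)) B"
    using lam_nonneg by (intro ridge_design.intro[OF assms(1)]) (simp add: ridge_design_axioms_def)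
  then show ?thesis by blast
qed

theorem lemma9:
  fixes M :: "'w measure"
    and X :: "nat \<Rightarrow> nat \<Rightarrow> real^'e"
    and \<Gamma> :: "real^'p^'e"
    and \<sigma> \<sigma>z :: real
    and lam :: "nat \<Rightarrow> real"
    and \<beta>0 :: "nat \<Rightarrow> real^'e"
    and E :: "nat \<Rightarrow> 'w \<Rightarrow> nat \<Rightarrow> real^'p"
    and \<epsilon> :: "nat \<Rightarrow> 'w \<Rightarrow> nat \<Rightarrow> real"
    and \<kappa> :: real and \<alpha>0 :: "real^'e" and \<Sigma> :: "real^'e^'e" and \<Theta> :: "real^'e"
  assumes prob: "prob_space M"
    and sig: "\<sigma> > 0" and sigz: "\<sigma>z > 0"
    and lam_nonneg: "\<And>n. lam n \<ge> 0"
    and E_normal: "\<And>n i j. i < n \<Longrightarrow>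
          distributed M lborel (\<lambda>\<omega>. E n \<omega> i $ j) (normal_density 0 \<sigma>z)"
    and eps_normal: "\<And>n i. i < n \<Longrightarrow>
          distributed M lborel (\<lambda>\<omega>. \<epsilon> n \<omega> i) (normal_density 0 \<sigma>)"
    and indep: "\<And>n. prob_space.indep_vars M (\<lambda>_. borel)
          (\<lambda>k \<omega>. case k of Inl (i, j) \<Rightarrow> E n \<omega> i $ j | Inr i \<Rightarrow> \<epsilon> n \<omega> i)
          (({..<n} \<times> UNIV) <+> {..<n})"
    and kappa: "(\<lambda>n. lam n / real n) \<longlonglongrightarrow> \<kappa>" and kappa_nonneg: "\<kappa> \<ge> 0"
    and alpha: "(\<lambda>n. sqrt (real n) *\<^sub>R \<beta>0 n) \<longlonglongrightarrow> \<alpha>0"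
    and Sigma: "(\<lambda>n. (1 / real n) *\<^sub>R (\<Sum>i<n. outerp (X n i))) \<longlonglongrightarrow> \<Sigma>"
    and Sigma_pd: "posdef \<Sigma>"
    and Theta: "(\<lambda>n. (1 / real n) *\<^sub>R (\<Sum>i<n. X n i)) \<longlonglongrightarrow> \<Theta>"
    and maxrow: "(\<lambda>n. (MAX i\<in>{..<n}. norm (X n i)) / real n powr (1/3)) \<longlonglongrightarrow> 0"
  defines "ytil \<equiv> \<lambda>n \<omega> i. aug (X n i v* \<Gamma> + E n \<omega> i) \<bullet>
            ridge_coef (lam n) (\<lambda>j. aug (X n j v* \<Gamma> + E n \<omega> j)) (\<lambda>j. X n j \<bullet> \<beta>0 n + \<epsilon> n \<omega> j) ({..<n} - {i})"
    and "yprime \<equiv> \<lambda>n \<omega> i. aug (X n i v* \<Gamma> + E n \<omega> i) \<bullet>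
            ridge_coef (lam n) (\<lambda>j. aug (X n j v* \<Gamma> + E n \<omega> j)) (\<lambda>j. X n j \<bullet> \<beta>0 n) {..<n}
          + aug (X n i v* \<Gamma> + E n \<omega> i) \<bullet> ridge_coef (lam n) (\<lambda>j. aug (X n j v* \<Gamma> + E n \<omega> j)) (\<epsilon> n \<omega>) {..<n}"
  shows "small_oP M (\<lambda>n \<omega>. sqrt (\<Sum>i<n. (ytil n \<omega> i - yprime n \<omega> i)\<^sup>2))
       \<and> big_OP M (\<lambda>n \<omega>. sqrt (\<Sum>i<n. (ytil n \<omega> i)\<^sup>2))
       \<and> big_OP M (\<lambda>n \<omega>. sqrt (\<Sum>i<n. (yprime n \<omega> i)\<^sup>2))"
proof -
  interpret gaussian_noise M E \<epsilon> \<sigma> \<sigma>z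
    by (rule gaussian_noise.intro[OF prob])
      (simp add: gaussian_noise_axioms_def sig sigz E_normal eps_normal indep)
  obtain Cm Mb B
    where "ridge_design M E \<epsilon> \<sigma> \<sigma>z (\<lambda>n j. X n j v* \<Gamma>) (\<lambda>n j. X n j \<bullet> \<beta>0 n) lam Cm Mb B"
    using ridge_design_of_regressors[where \<Gamma>=\<Gamma> and lam=lam,
        OF gaussian_noise_axioms lam_nonneg alpha Sigma Theta maxrow]
    by blast
  then interpret design: ridge_design M E \<epsilon> \<sigma> \<sigma>z "\<lambda>n j. X n j v* \<Gamma>" "\<lambda>n j. X n j \<bullet> \<beta>0 n" lam Cm Mb B .
  have coef: "ridge_coef (lam n) (\<lambda>j. aug (X n j v* \<Gamma> + E n \<omega> j)) (\<lambda>j. X n j \<bullet> \<beta>0 n + \<epsilon> n \<omega> j) S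
      = ridge_coef (lam n) (design.zrow n \<omega>) (\<lambda>j. X n j \<bullet> \<beta>0 n + \<epsilon>tr n \<omega> j) S"
    if "S \<subseteq> {..<n}" for n \<omega> S
    using that by (intro ridge_coef_cong) (auto simp: design.zrow_def Etr_eq \<epsilon>tr_eq)
  have "ytil n \<omega> i = design.loo_fit n \<omega> i" and "yprime n \<omega> i = design.fit n \<omega> i"
    if "i < n" for n \<omega> i
    using that coef[of "{..<n} - {i}" n \<omega>] coef[of "{..<n}" n \<omega>]
    by (simp_all add: assms(15,16) design.loo_fit_def design.fit_def design.zrow_def Etr_eq
        ridge_coef_add flip: inner_add_right)
  then show ?thesis
    using design.loo_fit_diff_small_oP design.loo_fit_big_OP design.fit_big_OP by simp
qed

end
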